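(* In the setting described in the context, for every $k>0$ let $z_i^k$ denote the valuation at iteration $i$ of the $k$-uniform restricted safety strategy-improvement algorithm with input $k$, and let $k'=\max\{k,|M|\}$. If $i\ge0$ is such that $z_i^k=z_{i+1}^k$, then $$z_i^k=\max_{\pi_1\in\Pi_1^{M,k'}}\ \inf_{\pi_2}\Pr^{\pi_1,\pi_2}(\mathrm{Safe}(F))$$ (pointwise), where $\Pi_1^{M,k'}$ is the set of $k'$-uniform memoryless player-1 strategies.
   Context: Concurrent game structure $G=(S,M,\Gamma_1,\Gamma_2,\delta)$: finite states, finite moves $M$, nonempty move sets $\Gamma_i(s)$, $\delta(s,a_1,a_2)\in\mathrm{Distr}(S)$ (simultaneous independent moves), $\mathrm{Dest}(s,a_1,a_2)=\mathrm{supp}\,\delta(s,a_1,a_2)$. Selectors assign to each state a distribution on available moves; $\overline{\xi}$ is the memoryless strategy playing $\xi$. $\mathrm{Safe}(F)$: plays staying in $F$; $\mathrm{val}_1^{\pi_1}(\mathrm{Safe}(F))(s)=\inf_{\pi_2}\Pr_s^{\pi_1,\pi_2}(\mathrm{Safe}(F))$, $\mathrm{val}_1(\mathrm{Safe}(F))=\sup_{\pi_1}\mathrm{val}_1^{\pi_1}$. $T=S\setminus F$, $W_1=\{s:\mathrm{val}_1(\mathrm{Safe}(F))(s)=1\}$; states of $W_1\cup T$ are assumed absorbing. For a valuation $v$: $\mathrm{Pre}_{\xi_1,\xi_2}(v)(s)=\sum_{a,b}\sum_tv(t)\delta(s,a,b)(t)\xi_1(s)(a)\xi_2(s)(b)$,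 $\mathrm{Pre}_{\xi,b}$ with player 2 playing $b$, $\mathrm{Pre}_{1:\xi}(v)(s)=\inf_{\xi_2}\mathrm{Pre}_{\xi,\xi_2}(v)(s)$. A selector at $s\notin T\cup W_1$ is $k$-uniform if all its probabilities are of the form $i/j$, integers $0\le i\le j\le k$; a selector/memoryless strategy is $k$-uniform if it is so at every such $s$. $\mathrm{Pre}_1^k(v)(s)=\max\{\mathrm{Pre}_{1:\xi}(v)(s):\xi\ k\text{-uniform at }s\}$; $\mathrm{OptSel}(v,s,k)$ = $k$-uniform $\xi$ attaining it; $\mathrm{CountOpt}(v,s,\xi,k)=\{b:\mathrm{Pre}_{\xi,b}(v)(s)=\mathrm{Pre}_1^k(v)(s)\}$; $\mathrm{OptSelCount}(v,s,k)$ = pairs $(\mathrm{supp}\,\xi,\mathrm{CountOpt}(v,s,\xi,k))$ for $\xi\in\mathrm{OptSel}(v,s,k)$. $\mathrm{TB}(G,v,F,k)=(\overline{G}^k_v,\overline{F})$: turn-based stochastic game with player-1 states $S$, player-2 states $(s,A,B)$, $(A,B)\in\mathrm{OptSelCount}(v,s,k)$, random states $(s,A,b)$, $b\in B$; edges $s\to(s,A,B)\to(s,A,b)\to t$ for $t\in\bigcup_{a\in A}\mathrm{Dest}(s,a,b)$ (uniform at random states); $\overline{F}$ is $F$ plus auxiliary states with first component in $F$. Almost-sure winning states: those from which player 1 can ensure $\mathrm{Safe}(\overline{F})$ with probability 1. $k$-uniform restricted algorithm (input $k$, using $k'=\max\{k,|M|\}$): $\gamma_0$ uniform on $\Gamma_1(s)$;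 $z_i^k=\mathrm{val}_1^{\overline{\gamma}_i}(\mathrm{Safe}(F))$. At iteration $i$: $I_{k'}=\{s\in S\setminus(W_1\cup T):\mathrm{Pre}_1^{k'}(z_i^k)(s)>z_i^k(s)\}$; if nonempty, $\gamma_{i+1}$ equals $\gamma_i$ outside $I_{k'}$ and on $I_{k'}$ a $k'$-uniform selector attaining $\mathrm{Pre}_1^{k'}(z_i^k)$; otherwise compute $\mathrm{TB}(G,z_i^k,F,k')$, its almost-sure winning set $\overline{A}$ for $\mathrm{Safe}(\overline{F})$ and a pure memoryless almost-sure winning strategy $\overline{\pi}_1$, let $U=(\overline{A}\cap S)\setminus W_1$, and if $U\ne\emptyset$ let $\gamma_{i+1}=\gamma_i$ outside $U$ and, at $s\in U$ with $\overline{\pi}_1(s)=(s,A,B)$, some $\xi\in\mathrm{OptSel}(z_i^k,s,k')$ with support $A$ and $\mathrm{CountOpt}(z_i^k,s,\xi,k')=B$. Stop when $I_{k'}=\emptyset$ and $U=\emptyset$ (the valuation sequence being constant afterwards). *)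

theory Defs
  imports "HOL-Probability.Probability"
begin

record ('s, 'm) cgame =
  cg_st :: "'s set"
  cg_mv :: "'m set"
  cg_g1 :: "'s \<Rightarrow> 'm set"
  cg_g2 :: "'s \<Rightarrow> 'm set"
  cg_tr :: "'s \<Rightarrow> 'm \<Rightarrow> 'm \<Rightarrow> 's pmf"

definition wf_cgame :: "('s, 'm) cgame \<Rightarrow> bool" where
  "wf_cgame G \<longleftrightarrow> finite (cg_st G) \<and> finite (cg_mv G) \<and>
     (\<forall>s\<in>cg_st G. cg_g1 G s \<noteq> {} \<and> cg_g1 G s \<subseteq> cg_mv G \<and>
        cg_g2 G s \<noteq> {} \<and> cg_g2 G s \<subseteq> cg_mv G \<and>
        (\<forall>a\<in>cg_g1 G s. \<forall>b\<in>cg_g2 G s. set_pmf (cg_tr G s a b) \<subseteq> cg_st G))"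

text \<open>General (history-dependent, randomized) strategies: a history is the nonempty
  list of states visited so far; the strategy picks a distribution over the moves
  available at the last state.\<close>

definition strategies1 :: "('s, 'm) cgame \<Rightarrow> ('s list \<Rightarrow> 'm pmf) set" where
  "strategies1 G = {\<pi>. \<forall>h. h \<noteq> [] \<and> last h \<in> cg_st G \<longrightarrow> set_pmf (\<pi> h) \<subseteq> cg_g1 G (last h)}"

definition strategies2 :: "('s, 'm) cgame \<Rightarrow> ('s list \<Rightarrow> 'm pmf) set" where
  "strategies2 G = {\<pi>. \<forall>h. h \<noteq> [] \<and> last h \<in> cg_st G \<longrightarrow> set_pmf (\<pi> h) \<subseteq> cg_g2 G (last h)}"

definition step_pmf :: "('s, 'm) cgame \<Rightarrow> ('s list \<Rightarrow> 'm pmf) \<Rightarrow> ('s list \<Rightarrow> 'm pmf)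
    \<Rightarrow> 's list \<Rightarrow> 's list pmf" where
  "step_pmf G \<pi>1 \<pi>2 h =
     bind_pmf (\<pi>1 h) (\<lambda>a. bind_pmf (\<pi>2 h) (\<lambda>b.
       map_pmf (\<lambda>t. h @ [t]) (cg_tr G (last h) a b)))"

text \<open>Distribution of the first n+1 states of the play from s.\<close>

fun hist_pmf :: "('s, 'm) cgame \<Rightarrow> ('s list \<Rightarrow> 'm pmf) \<Rightarrow> ('s list \<Rightarrow> 'm pmf)
    \<Rightarrow> 's \<Rightarrow> nat \<Rightarrow> 's list pmf" where
  "hist_pmf G \<pi>1 \<pi>2 s 0 = return_pmf [s]"
| "hist_pmf G \<pi>1 \<pi>2 s (Suc n) = bind_pmf (hist_pmf G \<pi>1 \<pi>2 s n) (step_pmf G \<pi>1 \<pi>2)"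

text \<open>Pr_s^{pi1,pi2}(Safe(F)): Safe(F) is the decreasing intersection of the cylinder
  events "the first n+1 states lie in F", so its probability is the infimum
  (limit) of the finite-horizon probabilities.\<close>

definition prob_safe :: "('s, 'm) cgame \<Rightarrow> ('s list \<Rightarrow> 'm pmf) \<Rightarrow> ('s list \<Rightarrow> 'm pmf)
    \<Rightarrow> 's set \<Rightarrow> 's \<Rightarrow> real" where
  "prob_safe G \<pi>1 \<pi>2 F s =
     (INF n. measure_pmf.prob (hist_pmf G \<pi>1 \<pi>2 s n) {h. set h \<subseteq> F})"

definition val1_strat :: "('s, 'm) cgame \<Rightarrow> ('s list \<Rightarrow> 'm pmf) \<Rightarrow> 's set \<Rightarrow> 's \<Rightarrow> real" where
  "val1_strat G \<pi>1 F s = (INF \<pi>2 \<in> strategies2 G. prob_safe G \<pi>1 \<pi>2 F s)"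

definition val1 :: "('s, 'm) cgame \<Rightarrow> 's set \<Rightarrow> 's \<Rightarrow> real" where
  "val1 G F s = (SUP \<pi>1 \<in> strategies1 G. val1_strat G \<pi>1 F s)"

definition W1 :: "('s, 'm) cgame \<Rightarrow> 's set \<Rightarrow> 's set" where
  "W1 G F = {s \<in> cg_st G. val1 G F s = 1}"

definition selector :: "('s, 'm) cgame \<Rightarrow> ('s \<Rightarrow> 'm pmf) \<Rightarrow> bool" where
  "selector G \<xi> \<longleftrightarrow> (\<forall>s\<in>cg_st G. set_pmf (\<xi> s) \<subseteq> cg_g1 G s)"

definition memoryless :: "('s \<Rightarrow> 'm pmf) \<Rightarrow> ('s list \<Rightarrow> 'm pmf)" where
  "memoryless \<xi> = (\<lambda>h. \<xi> (last h))"

definition kunif_dist :: "nat \<Rightarrow> 'm pmf \<Rightarrow> bool" where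
  "kunif_dist k d \<longleftrightarrow> (\<forall>a. \<exists>i j::nat. i \<le> j \<and> j \<le> k \<and> pmf d a = real i / real j)"

definition kunif_selector :: "('s, 'm) cgame \<Rightarrow> 's set \<Rightarrow> nat \<Rightarrow> ('s \<Rightarrow> 'm pmf) \<Rightarrow> bool" where
  "kunif_selector G F k \<xi> \<longleftrightarrow>
     (\<forall>s \<in> cg_st G - (W1 G F \<union> (cg_st G - F)). kunif_dist k (\<xi> s))"

definition pre_pair :: "('s, 'm) cgame \<Rightarrow> ('s \<Rightarrow> real) \<Rightarrow> 'm pmf \<Rightarrow> 'm pmf \<Rightarrow> 's \<Rightarrow> real" where
  "pre_pair G v d1 d2 s =
     (\<Sum>a\<in>cg_g1 G s. \<Sum>b\<in>cg_g2 G s. \<Sum>t\<in>cg_st G.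
        v t * pmf (cg_tr G s a b) t * pmf d1 a * pmf d2 b)"

definition pre_pure :: "('s, 'm) cgame \<Rightarrow> ('s \<Rightarrow> real) \<Rightarrow> 'm pmf \<Rightarrow> 'm \<Rightarrow> 's \<Rightarrow> real" where
  "pre_pure G v d1 b s =
     (\<Sum>a\<in>cg_g1 G s. \<Sum>t\<in>cg_st G. v t * pmf (cg_tr G s a b) t * pmf d1 a)"

definition pre1_sel :: "('s, 'm) cgame \<Rightarrow> ('s \<Rightarrow> real) \<Rightarrow> 'm pmf \<Rightarrow> 's \<Rightarrow> real" where
  "pre1_sel G v d s = (INF d2 \<in> {d2. set_pmf d2 \<subseteq> cg_g2 G s}. pre_pair G v d d2 s)"

definition pre1k :: "('s, 'm) cgame \<Rightarrow> nat \<Rightarrow> ('s \<Rightarrow> real) \<Rightarrow> 's \<Rightarrow> real" where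
  "pre1k G k v s =
     Max ((\<lambda>d. pre1_sel G v d s) ` {d. set_pmf d \<subseteq> cg_g1 G s \<and> kunif_dist k d})"

definition optsel :: "('s, 'm) cgame \<Rightarrow> nat \<Rightarrow> ('s \<Rightarrow> real) \<Rightarrow> 's \<Rightarrow> 'm pmf set" where
  "optsel G k v s = {d. set_pmf d \<subseteq> cg_g1 G s \<and> kunif_dist k d \<and>
                        pre1_sel G v d s = pre1k G k v s}"

definition countopt :: "('s, 'm) cgame \<Rightarrow> nat \<Rightarrow> ('s \<Rightarrow> real) \<Rightarrow> 's \<Rightarrow> 'm pmf \<Rightarrow> 'm set" where
  "countopt G k v s d = {b \<in> cg_g2 G s. pre_pure G v d b s = pre1k G k v s}"

definition optselcount :: "('s, 'm) cgame \<Rightarrow> nat \<Rightarrow> ('s \<Rightarrow> real) \<Rightarrow> 's \<Rightarrow> ('m set \<times> 'm set) set" where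
  "optselcount G k v s = (\<lambda>d. (set_pmf d, countopt G k v s d)) ` optsel G k v s"

datatype ('s, 'm) tbst = P1 's | P2 's "'m set" "'m set" | Rnd 's "'m set" 'm

fun tb_fst :: "('s, 'm) tbst \<Rightarrow> 's" where
  "tb_fst (P1 s) = s" | "tb_fst (P2 s A B) = s" | "tb_fst (Rnd s A b) = s"

definition tb_states :: "('s, 'm) cgame \<Rightarrow> nat \<Rightarrow> ('s \<Rightarrow> real) \<Rightarrow> ('s, 'm) tbst set" where
  "tb_states G k v =
     P1 ` cg_st G
     \<union> {P2 s A B | s A B. s \<in> cg_st G \<and> (A, B) \<in> optselcount G k v s}
     \<union> {Rnd s A b | s A B b. s \<in> cg_st G \<and> (A, B) \<in> optselcount G k v s \<and> b \<in> B}"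

fun tb_succ :: "('s, 'm) cgame \<Rightarrow> nat \<Rightarrow> ('s \<Rightarrow> real) \<Rightarrow> ('s, 'm) tbst \<Rightarrow> ('s, 'm) tbst set" where
  "tb_succ G k v (P1 s) = {P2 s A B | A B. (A, B) \<in> optselcount G k v s}"
| "tb_succ G k v (P2 s A B) = {Rnd s A b | b. b \<in> B}"
| "tb_succ G k v (Rnd s A b) = P1 ` (\<Union>a\<in>A. set_pmf (cg_tr G s a b))"

text \<open>The turn-based stochastic game, encoded as a concurrent game whose moves are
  the chosen successor states: player 1 chooses at player-1 states, player 2 at
  player-2 states (the other player has a single dummy move), and random states
  move uniformly at random to a successor.\<close>

definition TB :: "('s, 'm) cgame \<Rightarrow> nat \<Rightarrow> ('s \<Rightarrow> real) \<Rightarrow> (('s, 'm) tbst, ('s, 'm) tbst) cgame" where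
  "TB G k v =
     \<lparr> cg_st = tb_states G k v,
       cg_mv = tb_states G k v,
       cg_g1 = (\<lambda>u. case u of P1 s \<Rightarrow> tb_succ G k v u | _ \<Rightarrow> {u}),
       cg_g2 = (\<lambda>u. case u of P2 s A B \<Rightarrow> tb_succ G k v u | _ \<Rightarrow> {u}),
       cg_tr = (\<lambda>u a b. case u of P1 s \<Rightarrow> return_pmf a
                                | P2 s A B \<Rightarrow> return_pmf b
                                | Rnd s A c \<Rightarrow> pmf_of_set (tb_succ G k v u)) \<rparr>"

definition TB_F :: "('s, 'm) cgame \<Rightarrow> nat \<Rightarrow> ('s \<Rightarrow> real) \<Rightarrow> 's set \<Rightarrow> ('s, 'm) tbst set" where
  "TB_F G k v F = {u \<in> tb_states G k v. tb_fst u \<in> F}"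

definition as_win :: "('t, 't) cgame \<Rightarrow> 't set \<Rightarrow> 't set" where
  "as_win H Fb = {u \<in> cg_st H. \<exists>\<pi>1\<in>strategies1 H. \<forall>\<pi>2\<in>strategies2 H. prob_safe H \<pi>1 \<pi>2 Fb u = 1}"

definition pure_as_strategy :: "('t, 't) cgame \<Rightarrow> 't set \<Rightarrow> ('t \<Rightarrow> 't) \<Rightarrow> bool" where
  "pure_as_strategy H Fb \<sigma> \<longleftrightarrow>
     (\<forall>u\<in>cg_st H. \<sigma> u \<in> cg_g1 H u) \<and>
     (\<forall>u\<in>as_win H Fb. \<forall>\<pi>2\<in>strategies2 H.
         prob_safe H (\<lambda>h. return_pmf (\<sigma> (last h))) \<pi>2 Fb u = 1)"

definition improve_set :: "('s, 'm) cgame \<Rightarrow> 's set \<Rightarrow> nat \<Rightarrow> ('s \<Rightarrow> real) \<Rightarrow> 's set" where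
  "improve_set G F k v = {s \<in> cg_st G - (W1 G F \<union> (cg_st G - F)). pre1k G k v s > v s}"

definition alg_step :: "('s, 'm) cgame \<Rightarrow> 's set \<Rightarrow> nat \<Rightarrow> ('s \<Rightarrow> 'm pmf) \<Rightarrow> ('s \<Rightarrow> 'm pmf) \<Rightarrow> bool" where
  "alg_step G F k' \<gamma> \<gamma>' \<longleftrightarrow>
    (let z = val1_strat G (memoryless \<gamma>) F;
         I = improve_set G F k' z;
         U = {s \<in> cg_st G. P1 s \<in> as_win (TB G k' z) (TB_F G k' z F)} - W1 G F
     in (I \<noteq> {} \<and> (\<forall>s. s \<notin> I \<longrightarrow> \<gamma>' s = \<gamma> s) \<and> (\<forall>s\<in>I. \<gamma>' s \<in> optsel G k' z s))
      \<or> (I = {} \<and> U \<noteq> {} \<and>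
           (\<exists>\<sigma>. pure_as_strategy (TB G k' z) (TB_F G k' z F) \<sigma> \<and>
                (\<forall>s. s \<notin> U \<longrightarrow> \<gamma>' s = \<gamma> s) \<and>
                (\<forall>s\<in>U. \<exists>A B. \<sigma> (P1 s) = P2 s A B \<and> \<gamma>' s \<in> optsel G k' z s \<and>
                           set_pmf (\<gamma>' s) = A \<and> countopt G k' z s (\<gamma>' s) = B)))
      \<or> (I = {} \<and> U = {} \<and> \<gamma>' = \<gamma>))"

definition alg_run :: "('s, 'm) cgame \<Rightarrow> 's set \<Rightarrow> nat \<Rightarrow> (nat \<Rightarrow> 's \<Rightarrow> 'm pmf) \<Rightarrow> bool" where
  "alg_run G F k \<gamma> \<longleftrightarrow>
     \<gamma> 0 = (\<lambda>s. pmf_of_set (cg_g1 G s)) \<and>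
     (\<forall>i. alg_step G F (max k (card (cg_mv G))) (\<gamma> i) (\<gamma> (Suc i)))"

end

theory Submission
  imports Defs
begin

text \<open>
  Two facts about the value w = val(\<xi>) of a memoryless strategy drive the proof. It is a
  sub-fixpoint of the one-step operator, w(s) \<le> Pre_{\<xi>,b}(w)(s) for every counter-move b; and
  every valuation v that vanishes outside F and satisfies v(s) \<le> Pre_{\<xi>,b}(v)(s) is below w.
  Hence each kind of switch made by the algorithm strictly increases the value somewhere, and
  z_i = z_{i+1} means that the algorithm has terminated: Pre_k'(z) \<le> z, and every state that is
  almost-surely winning in TB(G, z, F, k') already lies in W1.

  Suppose now that a k'-uniform selector \<xi> had val(\<xi>) > z somewhere, and let \<Delta> > 0 be the
  largest gap val(\<xi>) - z. At a state of maximal gap the two inequalities above force \<xi> to be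
  optimal for z, and every optimal counter-move to lead only to states of maximal gap. Playing
  there the pair (support, optimal counter-moves) of \<xi> wins surely in TB, so these states are
  in W1, where z = 1 and no positive gap is possible.
\<close>

lemma finite_positive_lower_bound:
  fixes f :: "'a \<Rightarrow> real"
  assumes "finite A" and "\<forall>x\<in>A. 0 < f x"
  obtains g where "0 < g" "g \<le> 1" "\<forall>x\<in>A. g \<le> f x"
proof
  let ?g = "Min (insert 1 (f ` A))"
  show "0 < ?g" "?g \<le> 1" "\<forall>x\<in>A. ?g \<le> f x"
    using assms by auto
qed

lemma measure_pmf_prob_bind_pmf:
  "measure_pmf.prob (bind_pmf M N) X = (\<integral>x. measure_pmf.prob (N x) X \<partial>measure_pmf M)"
proof -
  have "ennreal (measure_pmf.prob (bind_pmf M N) X) = (\<integral>\<^sup>+x. ennreal (measure_pmf.prob (N x) X) \<partial>M)"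
    by (simp add: measure_pmf.emeasure_eq_measure[symmetric])
  also have "\<dots> = ennreal (\<integral>x. measure_pmf.prob (N x) X \<partial>measure_pmf M)"
    by (intro nn_integral_eq_integral measure_pmf.integrable_const_bound[where B=1]) auto
  finally show ?thesis by (simp add: integral_nonneg_AE)
qed

lemma integral_measure_pmf_cong:
  "(\<And>x. x \<in> set_pmf p \<Longrightarrow> f x = g x) \<Longrightarrow>
    (\<integral>x. f x \<partial>measure_pmf p) = (\<integral>x. g x \<partial>measure_pmf p)"
  by (intro integral_cong_AE) (auto simp: AE_measure_pmf_iff)

lemma integral_measure_pmf_const:
  "(\<And>x. x \<in> set_pmf p \<Longrightarrow> f x = c) \<Longrightarrow> (\<integral>x. f x \<partial>measure_pmf p) = (c :: real)"
  using integral_measure_pmf_cong[of p f "\<lambda>_. c"] by simp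

lemma sum_pmf_return_mult:
  "finite B \<Longrightarrow> b \<in> B \<Longrightarrow> (\<Sum>b'\<in>B. pmf (return_pmf b) b' * f b') = f b"
  by (simp add: indicator_def)

section \<open>Safety probabilities of plays\<close>

lemma set_pmf_step_pmf: "set_pmf (step_pmf H \<pi>1 \<pi>2 h) \<subseteq> range (\<lambda>t. h @ [t])"
  unfolding step_pmf_def by auto

lemma set_pmf_hist_pmf: "h \<in> set_pmf (hist_pmf H \<pi>1 \<pi>2 s n) \<Longrightarrow> h \<noteq> [] \<and> hd h = s"
proof (induction n arbitrary: h)
  case (Suc n)
  then obtain h0 where h0: "h0 \<in> set_pmf (hist_pmf H \<pi>1 \<pi>2 s n)" "h \<in> set_pmf (step_pmf H \<pi>1 \<pi>2 h0)"
    by auto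
  with set_pmf_step_pmf obtain t where "h = h0 @ [t]" by blast
  with Suc.IH[OF h0(1)] show ?case by auto
qed simp

lemma hist_pmf_cong:
  assumes "\<And>h. h \<noteq> [] \<Longrightarrow> hd h = s \<Longrightarrow> \<pi>1 h = \<pi>1' h \<and> \<pi>2 h = \<pi>2' h"
  shows "hist_pmf H \<pi>1 \<pi>2 s n = hist_pmf H \<pi>1' \<pi>2' s n"
proof (induction n)
  case (Suc n)
  show ?case
    unfolding hist_pmf.simps Suc.IH
    by (intro bind_pmf_cong refl) (auto simp: step_pmf_def dest!: set_pmf_hist_pmf assms)
qed simp

lemma hist_pmf_Suc_first_round:
  "hist_pmf H \<pi>1 \<pi>2 s (Suc n) =
    bind_pmf (\<pi>1 [s]) (\<lambda>a. bind_pmf (\<pi>2 [s]) (\<lambda>b. bind_pmf (cg_tr H s a b) (\<lambda>t.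
      map_pmf (Cons s) (hist_pmf H (\<lambda>h. \<pi>1 (s # h)) (\<lambda>h. \<pi>2 (s # h)) t n))))"
proof (induction n)
  case 0
  then show ?case by (simp add: step_pmf_def bind_return_pmf map_pmf_def)
next
  case (Suc n)
  let ?p1 = "\<lambda>h. \<pi>1 (s # h)" and ?p2 = "\<lambda>h. \<pi>2 (s # h)"
  have step_Cons: "step_pmf H \<pi>1 \<pi>2 (s # h) = map_pmf (Cons s) (step_pmf H ?p1 ?p2 h)"
    if "h \<noteq> []" for h
    using that by (simp add: step_pmf_def map_bind_pmf map_pmf_comp)
  have "hist_pmf H \<pi>1 \<pi>2 s (Suc (Suc n)) =
      bind_pmf (\<pi>1 [s]) (\<lambda>a. bind_pmf (\<pi>2 [s]) (\<lambda>b. bind_pmf (cg_tr H s a b) (\<lambda>t.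
        bind_pmf (hist_pmf H ?p1 ?p2 t n) (\<lambda>h. step_pmf H \<pi>1 \<pi>2 (s # h)))))"
    using Suc.IH by (simp add: bind_assoc_pmf bind_map_pmf)
  also have "\<dots> = bind_pmf (\<pi>1 [s]) (\<lambda>a. bind_pmf (\<pi>2 [s]) (\<lambda>b. bind_pmf (cg_tr H s a b) (\<lambda>t.
      map_pmf (Cons s) (hist_pmf H ?p1 ?p2 t (Suc n)))))"
    unfolding hist_pmf.simps map_bind_pmf
    by (intro bind_pmf_cong refl) (auto simp: step_Cons dest!: set_pmf_hist_pmf)
  finally show ?case .
qed

definition prob_safe_upto ::
    "('s, 'm) cgame \<Rightarrow> ('s list \<Rightarrow> 'm pmf) \<Rightarrow> ('s list \<Rightarrow> 'm pmf) \<Rightarrow> 's set \<Rightarrow> 's \<Rightarrow> nat \<Rightarrow> real"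
  where "prob_safe_upto H \<pi>1 \<pi>2 Fb s n = measure_pmf.prob (hist_pmf H \<pi>1 \<pi>2 s n) {h. set h \<subseteq> Fb}"

lemma prob_safe_upto_0: "prob_safe_upto H \<pi>1 \<pi>2 Fb s 0 = (if s \<in> Fb then 1 else 0)"
  by (simp add: prob_safe_upto_def)

lemma prob_safe_upto_Suc:
  "prob_safe_upto H \<pi>1 \<pi>2 Fb s (Suc n) = (if s \<in> Fb then
     (\<integral>a. (\<integral>b. (\<integral>t. prob_safe_upto H (\<lambda>h. \<pi>1 (s # h)) (\<lambda>h. \<pi>2 (s # h)) Fb t n
        \<partial>cg_tr H s a b) \<partial>\<pi>2 [s]) \<partial>\<pi>1 [s])
   else 0)"
proof -
  have "Cons s -` {h. set h \<subseteq> Fb} = (if s \<in> Fb then {h. set h \<subseteq> Fb} else {})"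
    by auto
  then show ?thesis
    unfolding prob_safe_upto_def hist_pmf_Suc_first_round measure_pmf_prob_bind_pmf measure_map_pmf
    by (cases "s \<in> Fb") auto
qed

lemma prob_safe_upto_nonneg: "0 \<le> prob_safe_upto H \<pi>1 \<pi>2 Fb s n"
  and prob_safe_upto_le_1: "prob_safe_upto H \<pi>1 \<pi>2 Fb s n \<le> 1"
  by (simp_all add: prob_safe_upto_def)

lemma prob_safe_upto_Suc_le: "prob_safe_upto H \<pi>1 \<pi>2 Fb s (Suc n) \<le> prob_safe_upto H \<pi>1 \<pi>2 Fb s n"
proof -
  let ?safe = "{h. set h \<subseteq> Fb}"
  have step_le: "measure_pmf.prob (step_pmf H \<pi>1 \<pi>2 h) ?safe \<le> indicator ?safe h" for h
  proof (cases "set h \<subseteq> Fb")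
    case False
    then have "set_pmf (step_pmf H \<pi>1 \<pi>2 h) \<inter> ?safe = {}"
      using set_pmf_step_pmf[of H \<pi>1 \<pi>2 h] by force
    then have "measure_pmf.prob (step_pmf H \<pi>1 \<pi>2 h) ?safe = 0"
      by (simp add: measure_pmf_zero_iff)
    with False show ?thesis by simp
  qed simp
  have "prob_safe_upto H \<pi>1 \<pi>2 Fb s (Suc n) =
      (\<integral>h. measure_pmf.prob (step_pmf H \<pi>1 \<pi>2 h) ?safe \<partial>hist_pmf H \<pi>1 \<pi>2 s n)"
    by (simp add: prob_safe_upto_def measure_pmf_prob_bind_pmf)
  also have "\<dots> \<le> (\<integral>h. indicator ?safe h \<partial>hist_pmf H \<pi>1 \<pi>2 s n)"
    by (intro integral_mono measure_pmf.integrable_const_bound[where B=1] step_le) auto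
  also have "\<dots> = prob_safe_upto H \<pi>1 \<pi>2 Fb s n"
    by (simp add: prob_safe_upto_def)
  finally show ?thesis .
qed

lemma prob_safe_upto_antimono:
  "n \<le> m \<Longrightarrow> prob_safe_upto H \<pi>1 \<pi>2 Fb s m \<le> prob_safe_upto H \<pi>1 \<pi>2 Fb s n"
  by (induction m rule: dec_induct) (auto intro: order_trans[OF prob_safe_upto_Suc_le])

lemma prob_safe_eq_INF: "prob_safe H \<pi>1 \<pi>2 Fb s = (INF n. prob_safe_upto H \<pi>1 \<pi>2 Fb s n)"
  by (simp add: prob_safe_def prob_safe_upto_def)

lemma prob_safe_le_upto: "prob_safe H \<pi>1 \<pi>2 Fb s \<le> prob_safe_upto H \<pi>1 \<pi>2 Fb s n"
  unfolding prob_safe_eq_INF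
  by (rule cINF_lower) (auto intro: bdd_belowI[where m=0] prob_safe_upto_nonneg)

lemma prob_safe_greatest:
  "(\<And>n. c \<le> prob_safe_upto H \<pi>1 \<pi>2 Fb s n) \<Longrightarrow> c \<le> prob_safe H \<pi>1 \<pi>2 Fb s"
  unfolding prob_safe_eq_INF by (rule cINF_greatest) auto

lemma prob_safe_nonneg: "0 \<le> prob_safe H \<pi>1 \<pi>2 Fb s"
  by (intro prob_safe_greatest prob_safe_upto_nonneg)

lemma prob_safe_le_1: "prob_safe H \<pi>1 \<pi>2 Fb s \<le> 1"
  using prob_safe_le_upto[of H \<pi>1 \<pi>2 Fb s 0] prob_safe_upto_le_1[of H \<pi>1 \<pi>2 Fb s 0]
  by linarith

lemma prob_safe_less_imp_eventually:
  assumes "prob_safe H \<pi>1 \<pi>2 Fb s < c"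
  shows "\<exists>N. \<forall>n\<ge>N. prob_safe_upto H \<pi>1 \<pi>2 Fb s n < c"
proof -
  from assms obtain N where "prob_safe_upto H \<pi>1 \<pi>2 Fb s N < c"
    unfolding prob_safe_eq_INF
    by (subst (asm) cINF_less_iff) (auto intro: bdd_belowI[where m=0] prob_safe_upto_nonneg)
  then show ?thesis
    using prob_safe_upto_antimono by (meson le_less_trans)
qed

lemma prob_safe_outside: "s \<notin> Fb \<Longrightarrow> prob_safe H \<pi>1 \<pi>2 Fb s = 0"
  using prob_safe_le_upto[of H \<pi>1 \<pi>2 Fb s 0] prob_safe_nonneg[of H \<pi>1 \<pi>2 Fb s]
  by (simp add: prob_safe_upto_0)

lemma prob_safe_upto_Suc_le_fixed_transition:
  assumes "\<And>a b. a \<in> set_pmf (\<pi>1 [u]) \<Longrightarrow> b \<in> set_pmf (\<pi>2 [u]) \<Longrightarrow> cg_tr H u a b = q"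
  shows "prob_safe_upto H \<pi>1 \<pi>2 Fb u (Suc n) \<le>
    (\<integral>t. prob_safe_upto H (\<lambda>h. \<pi>1 (u # h)) (\<lambda>h. \<pi>2 (u # h)) Fb t n \<partial>q)"
proof -
  let ?P = "\<lambda>t. prob_safe_upto H (\<lambda>h. \<pi>1 (u # h)) (\<lambda>h. \<pi>2 (u # h)) Fb t n"
  have "(\<integral>a. (\<integral>b. (\<integral>t. ?P t \<partial>cg_tr H u a b) \<partial>\<pi>2 [u]) \<partial>\<pi>1 [u]) =
      (\<integral>a. (\<integral>b. (\<integral>t. ?P t \<partial>q) \<partial>\<pi>2 [u]) \<partial>\<pi>1 [u])"
    using assms by (intro integral_measure_pmf_cong) simp
  then have "(\<integral>a. (\<integral>b. (\<integral>t. ?P t \<partial>cg_tr H u a b) \<partial>\<pi>2 [u]) \<partial>\<pi>1 [u]) = (\<integral>t. ?P t \<partial>q)"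
    by simp
  moreover have "0 \<le> (\<integral>t. ?P t \<partial>q)"
    by (intro integral_nonneg_AE) (simp add: prob_safe_upto_nonneg)
  ultimately show ?thesis by (simp add: prob_safe_upto_Suc)
qed

lemma prob_safe_upto_memoryless_shift:
  "prob_safe_upto H (\<lambda>h. memoryless \<xi> (s # h)) \<pi>2 Fb t n = prob_safe_upto H (memoryless \<xi>) \<pi>2 Fb t n"
  unfolding prob_safe_upto_def
  by (subst hist_pmf_cong[where \<pi>1'="memoryless \<xi>" and \<pi>2'=\<pi>2]) (auto simp: memoryless_def)

lemma memoryless_singleton [simp]: "memoryless \<xi> [s] = \<xi> s"
  by (simp add: memoryless_def)

lemma strategies2_moves:
  "\<pi>2 \<in> strategies2 H \<Longrightarrow> h \<noteq> [] \<Longrightarrow> last h \<in> cg_st H \<Longrightarrow> set_pmf (\<pi>2 h) \<subseteq> cg_g2 H (last h)"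
  unfolding strategies2_def by blast

lemma strategies2_shift: "\<pi>2 \<in> strategies2 H \<Longrightarrow> (\<lambda>h. \<pi>2 (s # h)) \<in> strategies2 H"
  unfolding strategies2_def
proof clarify
  fix h x
  assume moves: "\<forall>h. h \<noteq> [] \<and> last h \<in> cg_st H \<longrightarrow> set_pmf (\<pi>2 h) \<subseteq> cg_g2 H (last h)"
    and "x \<in> set_pmf (\<pi>2 (s # h))" "h \<noteq> []" "last h \<in> cg_st H"
  with moves[rule_format, of "s # h"] show "x \<in> cg_g2 H (last h)" by auto
qed

lemma prob_safe_upto_closed_set:
  assumes "C \<subseteq> cg_st H" and "C \<subseteq> Fb"
    and closed: "\<forall>u\<in>C. \<forall>a\<in>set_pmf (\<xi> u). \<forall>b\<in>cg_g2 H u. set_pmf (cg_tr H u a b) \<subseteq> C"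
  shows "\<pi>2 \<in> strategies2 H \<Longrightarrow> u \<in> C \<Longrightarrow> prob_safe_upto H (memoryless \<xi>) \<pi>2 Fb u n = 1"
proof (induction n arbitrary: \<pi>2 u)
  case 0
  then show ?case using assms(2) by (auto simp: prob_safe_upto_0)
next
  case (Suc n)
  have moves2: "set_pmf (\<pi>2 [u]) \<subseteq> cg_g2 H u"
    using strategies2_moves[OF Suc.prems(1), of "[u]"] Suc.prems assms(1) by auto
  have "prob_safe_upto H (memoryless \<xi>) \<pi>2 Fb u (Suc n) =
     (\<integral>a. (\<integral>b. (\<integral>t. prob_safe_upto H (memoryless \<xi>) (\<lambda>h. \<pi>2 (u # h)) Fb t n
        \<partial>cg_tr H u a b) \<partial>\<pi>2 [u]) \<partial>\<xi> u)"
    using Suc.prems assms(2) by (auto simp: prob_safe_upto_Suc prob_safe_upto_memoryless_shift)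
  also have "\<dots> = 1"
    using Suc.IH[OF strategies2_shift[OF Suc.prems(1)]] closed Suc.prems(2) moves2
    by (intro integral_measure_pmf_const) blast
  finally show ?case .
qed

lemma prob_safe_closed_set:
  assumes "C \<subseteq> cg_st H" and "C \<subseteq> Fb"
    and "\<forall>u\<in>C. \<forall>a\<in>set_pmf (\<xi> u). \<forall>b\<in>cg_g2 H u. set_pmf (cg_tr H u a b) \<subseteq> C"
    and "\<pi>2 \<in> strategies2 H" and "u \<in> C"
  shows "prob_safe H (memoryless \<xi>) \<pi>2 Fb u = 1"
  using prob_safe_upto_closed_set[OF assms] prob_safe_le_1
  by (intro antisym prob_safe_greatest) simp_all

lemma strategies1_memoryless_pure:
  "(\<And>u. u \<in> cg_st H \<Longrightarrow> \<sigma> u \<in> cg_g1 H u) \<Longrightarrow> memoryless (\<lambda>u. return_pmf (\<sigma> u)) \<in> strategies1 H"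
  unfolding strategies1_def memoryless_def by auto

text \<open>Play b at s; from the second state t on, play pf t as if the play had started in t.\<close>

definition first_move_then :: "'s \<Rightarrow> 'm \<Rightarrow> ('s \<Rightarrow> 's list \<Rightarrow> 'm pmf) \<Rightarrow> 's list \<Rightarrow> 'm pmf" where
  "first_move_then s b pf h =
     (case h of [] \<Rightarrow> pf s [] | [x] \<Rightarrow> (if x = s then return_pmf b else pf x [x])
              | x # y # r \<Rightarrow> pf y (y # r))"

lemma first_move_then_strategies2:
  assumes "b \<in> cg_g2 H s" and pf: "\<And>t. pf t \<in> strategies2 H"
  shows "first_move_then s b pf \<in> strategies2 H"
  unfolding strategies2_def
proof clarify
  fix h x assume h: "h \<noteq> []" "last h \<in> cg_st H" and x: "x \<in> set_pmf (first_move_then s b pf h)"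
  show "x \<in> cg_g2 H (last h)"
  proof (cases h rule: remdups_adj.cases)
    case (2 y)
    then show ?thesis
      using assms strategies2_moves[OF pf, of "[y]"] h x by (auto simp: first_move_then_def split: if_splits)
  next
    case (3 y z r)
    then show ?thesis
      using strategies2_moves[OF pf, of "z # r" z] h x by (auto simp: first_move_then_def)
  qed (use h in simp)
qed

lemma first_move_then_first [simp]: "first_move_then s b pf [s] = return_pmf b"
  by (simp add: first_move_then_def)

lemma prob_safe_upto_first_move_then:
  "prob_safe_upto H (\<lambda>h. memoryless \<xi> (s # h)) (\<lambda>h. first_move_then s b pf (s # h)) Fb t n =
   prob_safe_upto H (memoryless \<xi>) (pf t) Fb t n"
  unfolding prob_safe_upto_def
  by (subst hist_pmf_cong[where \<pi>1'="memoryless \<xi>" and \<pi>2'="pf t"])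
     (auto simp: memoryless_def first_move_then_def neq_Nil_conv)

text \<open>Player 2 plays m after the history p, and restarts the strategy \<pi> once the play
  has gone through the prefix q.\<close>

definition restart_after :: "'s list \<Rightarrow> 'm \<Rightarrow> 's list \<Rightarrow> ('s list \<Rightarrow> 'm pmf) \<Rightarrow> 's list \<Rightarrow> 'm pmf" where
  "restart_after p m q \<pi> h =
     (if h = p then return_pmf m
      else if length q < length h \<and> take (length q) h = q then \<pi> (drop (length q) h) else \<pi> h)"

lemma restart_after_strategies2:
  assumes \<pi>: "\<pi> \<in> strategies2 H" and m: "last p \<in> cg_st H \<Longrightarrow> m \<in> cg_g2 H (last p)"
  shows "restart_after p m q \<pi> \<in> strategies2 H"
  unfolding strategies2_def
proof clarify
  fix h x assume h: "h \<noteq> []" "last h \<in> cg_st H" and x: "x \<in> set_pmf (restart_after p m q \<pi> h)"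
  consider "h = p" | "h \<noteq> p" "length q < length h" "take (length q) h = q"
    | "h \<noteq> p" "\<not> (length q < length h \<and> take (length q) h = q)"
    by blast
  then show "x \<in> cg_g2 H (last h)"
  proof cases
    case 2
    then have "drop (length q) h \<noteq> []" "last (drop (length q) h) = last h" by auto
    then show ?thesis
      using 2 x h strategies2_moves[OF \<pi>, of "drop (length q) h"] by (auto simp: restart_after_def)
  qed (use x h m strategies2_moves[OF \<pi>, of h] in \<open>auto simp: restart_after_def\<close>)
qed

locale wf_game =
  fixes G :: "('s, 'm) cgame"
  assumes wf: "wf_cgame G"
begin

lemma finite_states: "finite (cg_st G)" and finite_moves: "finite (cg_mv G)"
  using wf by (auto simp: wf_cgame_def)

lemma moves1_nonempty: "s \<in> cg_st G \<Longrightarrow> cg_g1 G s \<noteq> {}"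
  and moves2_nonempty: "s \<in> cg_st G \<Longrightarrow> cg_g2 G s \<noteq> {}"
  and moves1_subset: "s \<in> cg_st G \<Longrightarrow> cg_g1 G s \<subseteq> cg_mv G"
  and moves2_subset: "s \<in> cg_st G \<Longrightarrow> cg_g2 G s \<subseteq> cg_mv G"
  and set_pmf_tr_subset:
    "s \<in> cg_st G \<Longrightarrow> a \<in> cg_g1 G s \<Longrightarrow> b \<in> cg_g2 G s \<Longrightarrow> set_pmf (cg_tr G s a b) \<subseteq> cg_st G"
  using wf by (auto simp: wf_cgame_def)

lemma finite_moves1: "s \<in> cg_st G \<Longrightarrow> finite (cg_g1 G s)"
  using moves1_subset finite_moves finite_subset by blast

lemma finite_moves2: "s \<in> cg_st G \<Longrightarrow> finite (cg_g2 G s)"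
  using moves2_subset finite_moves finite_subset by blast

lemma selector_moves: "selector G \<xi> \<Longrightarrow> s \<in> cg_st G \<Longrightarrow> set_pmf (\<xi> s) \<subseteq> cg_g1 G s"
  by (simp add: selector_def)

lemma memoryless_strategies1: "selector G \<xi> \<Longrightarrow> memoryless \<xi> \<in> strategies1 G"
  unfolding selector_def strategies1_def memoryless_def by auto

definition some_strategy2 :: "'s list \<Rightarrow> 'm pmf" where
  "some_strategy2 h = return_pmf (SOME b. b \<in> cg_g2 G (last h))"

lemma some_strategy2: "some_strategy2 \<in> strategies2 G"
  unfolding strategies2_def some_strategy2_def using moves2_nonempty
  by (auto intro: some_in_eq[THEN iffD2])

lemma integral_round_eq_pre_pure:
  assumes s: "s \<in> cg_st G" and d1: "set_pmf d1 \<subseteq> cg_g1 G s" and d2: "set_pmf d2 \<subseteq> cg_g2 G s"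
  shows "(\<integral>a. (\<integral>b. (\<integral>t. f t \<partial>cg_tr G s a b) \<partial>d2) \<partial>d1) =
     (\<Sum>b\<in>cg_g2 G s. pmf d2 b * pre_pure G f d1 b s)"
proof -
  have inner: "(\<integral>t. f t \<partial>cg_tr G s a b) = (\<Sum>t\<in>cg_st G. f t * pmf (cg_tr G s a b) t)"
    if "a \<in> cg_g1 G s" "b \<in> cg_g2 G s" for a b
    using set_pmf_tr_subset[OF s that] finite_states by (intro integral_measure_pmf_real) auto
  have "(\<integral>a. (\<integral>b. (\<integral>t. f t \<partial>cg_tr G s a b) \<partial>d2) \<partial>d1) =
     (\<Sum>a\<in>cg_g1 G s. (\<Sum>b\<in>cg_g2 G s. (\<Sum>t\<in>cg_st G. f t * pmf (cg_tr G s a b) t) * pmf d2 b) * pmf d1 a)"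
    using d1 d2 finite_moves1[OF s] finite_moves2[OF s]
    by (auto simp: integral_measure_pmf_real[where A="cg_g1 G s"] inner
        integral_measure_pmf_real[where A="cg_g2 G s"] subset_iff intro!: sum.cong)
  also have "\<dots> = (\<Sum>b\<in>cg_g2 G s. pmf d2 b * pre_pure G f d1 b s)"
    unfolding pre_pure_def sum_distrib_left sum_distrib_right
    by (subst sum.swap) (simp add: ac_simps)
  finally show ?thesis .
qed

lemma pre_pure_mono:
  "\<forall>t\<in>cg_st G. f t \<le> g t \<Longrightarrow> pre_pure G f d b s \<le> pre_pure G g d b s"
  unfolding pre_pure_def by (intro sum_mono mult_right_mono) auto

lemma pre_pure_add: "pre_pure G (\<lambda>t. f t + g t) d b s = pre_pure G f d b s + pre_pure G g d b s"
  unfolding pre_pure_def by (simp add: algebra_simps sum.distrib)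

lemma pre_pure_cmult: "pre_pure G (\<lambda>t. c * f t) d b s = c * pre_pure G f d b s"
  unfolding pre_pure_def by (simp add: algebra_simps sum_distrib_left)

lemma pre_pure_const:
  assumes s: "s \<in> cg_st G" and d: "set_pmf d \<subseteq> cg_g1 G s" and b: "b \<in> cg_g2 G s"
  shows "pre_pure G (\<lambda>t. c) d b s = c"
proof -
  have "pre_pure G (\<lambda>t. c) d b s = (\<Sum>a\<in>cg_g1 G s. c * (\<Sum>t\<in>cg_st G. pmf (cg_tr G s a b) t) * pmf d a)"
    unfolding pre_pure_def by (simp add: sum_distrib_left sum_distrib_right algebra_simps)
  also have "\<dots> = (\<Sum>a\<in>cg_g1 G s. c * pmf d a)"
    using set_pmf_tr_subset[OF s _ b] finite_states by (intro sum.cong refl) (simp add: sum_pmf_eq_1)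
  also have "\<dots> = c"
    using sum_pmf_eq_1[OF finite_moves1[OF s] d] by (simp add: sum_distrib_left[symmetric])
  finally show ?thesis .
qed

lemma pre_pure_cong:
  assumes "\<And>a t. a \<in> set_pmf d \<Longrightarrow> t \<in> set_pmf (cg_tr G s a b) \<Longrightarrow> f t = g t"
  shows "pre_pure G f d b s = pre_pure G g d b s"
  unfolding pre_pure_def
proof (intro sum.cong refl)
  fix a t
  show "f t * pmf (cg_tr G s a b) t * pmf d a = g t * pmf (cg_tr G s a b) t * pmf d a"
    using assms[of a t] by (cases "a \<in> set_pmf d"; cases "t \<in> set_pmf (cg_tr G s a b)") (auto simp: set_pmf_iff)
qed

lemma pre_pure_nonneg_eq_0:
  assumes s: "s \<in> cg_st G" and nonneg: "\<forall>t\<in>cg_st G. 0 \<le> f t" and le: "pre_pure G f d b s \<le> 0"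
    and a: "a \<in> set_pmf d" "a \<in> cg_g1 G s" and t: "t \<in> set_pmf (cg_tr G s a b)" "t \<in> cg_st G"
  shows "f t = 0"
proof -
  define e where "e a = (\<Sum>t\<in>cg_st G. f t * pmf (cg_tr G s a b) t) * pmf d a" for a
  have e_nonneg: "\<forall>a\<in>cg_g1 G s. 0 \<le> e a"
    using nonneg by (auto simp: e_def intro!: sum_nonneg mult_nonneg_nonneg)
  have "pre_pure G f d b s = sum e (cg_g1 G s)"
    unfolding pre_pure_def e_def by (simp add: sum_distrib_right)
  then have "sum e (cg_g1 G s) = 0"
    using le e_nonneg sum_nonneg[of "cg_g1 G s" e] by auto
  then have "e a = 0"
    using e_nonneg finite_moves1[OF s] a(2) by (subst (asm) sum_nonneg_eq_0_iff) auto
  then have "(\<Sum>t\<in>cg_st G. f t * pmf (cg_tr G s a b) t) = 0"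
    using a(1) by (simp add: e_def set_pmf_iff)
  then have "f t * pmf (cg_tr G s a b) t = 0"
    using nonneg finite_states t(2) by (subst (asm) sum_nonneg_eq_0_iff) auto
  then show ?thesis using t(1) by (simp add: set_pmf_iff)
qed

lemma pre_pure_ge_bound_imp_eq:
  assumes s: "s \<in> cg_st G" and d: "set_pmf d \<subseteq> cg_g1 G s" and b: "b \<in> cg_g2 G s"
    and bound: "\<forall>t\<in>cg_st G. f t \<le> c" and ge: "c \<le> pre_pure G f d b s"
    and a: "a \<in> set_pmf d" and t: "t \<in> set_pmf (cg_tr G s a b)"
  shows "f t = c"
proof -
  have aG: "a \<in> cg_g1 G s" using a d by auto
  have "pre_pure G (\<lambda>u. c + (-1) * f u) d b s = c - pre_pure G f d b s"
    unfolding pre_pure_add pre_pure_cmult pre_pure_const[OF s d b] by simp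
  then have "pre_pure G (\<lambda>u. c + (-1) * f u) d b s \<le> 0" using ge by simp
  from pre_pure_nonneg_eq_0[OF s _ this a aG t] bound set_pmf_tr_subset[OF s aG b] t
  show ?thesis by auto
qed

lemma val1_strat_le_prob_safe:
  "\<pi>2 \<in> strategies2 G \<Longrightarrow> val1_strat G \<pi>1 F s \<le> prob_safe G \<pi>1 \<pi>2 F s"
  unfolding val1_strat_def by (rule cINF_lower) (auto intro: bdd_belowI[where m=0] prob_safe_nonneg)

lemma val1_strat_greatest:
  "(\<And>\<pi>2. \<pi>2 \<in> strategies2 G \<Longrightarrow> c \<le> prob_safe G \<pi>1 \<pi>2 F s) \<Longrightarrow> c \<le> val1_strat G \<pi>1 F s"
  unfolding val1_strat_def using some_strategy2 by (intro cINF_greatest) auto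

lemma val1_strat_nonneg: "0 \<le> val1_strat G \<pi>1 F s"
  by (intro val1_strat_greatest prob_safe_nonneg)

lemma val1_strat_le_1: "val1_strat G \<pi>1 F s \<le> 1"
  using val1_strat_le_prob_safe[OF some_strategy2, of \<pi>1 F s] prob_safe_le_1[of G \<pi>1 some_strategy2 F s]
  by linarith

lemma val1_strat_less_imp_ex:
  "val1_strat G \<pi>1 F s < c \<Longrightarrow> \<exists>\<pi>2\<in>strategies2 G. prob_safe G \<pi>1 \<pi>2 F s < c"
  unfolding val1_strat_def using some_strategy2
  by (subst (asm) cINF_less_iff) (auto intro: bdd_belowI[where m=0] prob_safe_nonneg)

lemma val1_strat_outside: "s \<notin> F \<Longrightarrow> val1_strat G \<pi>1 F s = 0"
  using val1_strat_le_prob_safe[OF some_strategy2, of \<pi>1 F s] val1_strat_nonneg[of \<pi>1 F s]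
    prob_safe_outside[of s F G \<pi>1 some_strategy2]
  by simp

lemma subfixpoint_le_prob_safe_upto:
  assumes sel: "selector G \<xi>"
    and v01: "\<forall>t\<in>cg_st G. 0 \<le> v t \<and> v t \<le> 1" and v0: "\<forall>t\<in>cg_st G - F. v t = 0"
    and sub: "\<forall>s\<in>cg_st G \<inter> F. \<forall>b\<in>cg_g2 G s. v s \<le> pre_pure G v (\<xi> s) b s"
  shows "\<pi>2 \<in> strategies2 G \<Longrightarrow> s \<in> cg_st G \<Longrightarrow> v s \<le> prob_safe_upto G (memoryless \<xi>) \<pi>2 F s n"
proof (induction n arbitrary: \<pi>2 s)
  case 0
  then show ?case using v01 v0 by (auto simp: prob_safe_upto_0)
next
  case (Suc n)
  show ?case
  proof (cases "s \<in> F")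
    case False
    then show ?thesis using v0 Suc.prems by (simp add: prob_safe_upto_Suc)
  next
    case True
    let ?P = "\<lambda>t. prob_safe_upto G (memoryless \<xi>) (\<lambda>h. \<pi>2 (s # h)) F t n"
    have moves2: "set_pmf (\<pi>2 [s]) \<subseteq> cg_g2 G s"
      using strategies2_moves[OF Suc.prems(1), of "[s]"] Suc.prems by simp
    have "prob_safe_upto G (memoryless \<xi>) \<pi>2 F s (Suc n) = (\<Sum>b\<in>cg_g2 G s. pmf (\<pi>2 [s]) b * pre_pure G ?P (\<xi> s) b s)"
      using True integral_round_eq_pre_pure[OF Suc.prems(2) selector_moves[OF sel Suc.prems(2)] moves2]
      by (simp add: prob_safe_upto_Suc prob_safe_upto_memoryless_shift)
    also have "\<dots> \<ge> (\<Sum>b\<in>cg_g2 G s. pmf (\<pi>2 [s]) b * v s)"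
    proof (intro sum_mono mult_left_mono)
      fix b assume b: "b \<in> cg_g2 G s"
      have "v s \<le> pre_pure G v (\<xi> s) b s" using sub True Suc.prems b by auto
      also have "\<dots> \<le> pre_pure G ?P (\<xi> s) b s"
        using Suc.IH[OF strategies2_shift[OF Suc.prems(1)]] by (intro pre_pure_mono) auto
      finally show "v s \<le> pre_pure G ?P (\<xi> s) b s" .
    qed simp
    also have "(\<Sum>b\<in>cg_g2 G s. pmf (\<pi>2 [s]) b * v s) = v s"
      using sum_pmf_eq_1[OF finite_moves2[OF Suc.prems(2)] moves2] by (simp add: sum_distrib_right[symmetric])
    finally show ?thesis .
  qed
qed

lemma subfixpoint_le_val1_strat:
  assumes "selector G \<xi>"
    and "\<forall>t\<in>cg_st G. 0 \<le> v t \<and> v t \<le> 1" and "\<forall>t\<in>cg_st G - F. v t = 0"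
    and "\<forall>s\<in>cg_st G \<inter> F. \<forall>b\<in>cg_g2 G s. v s \<le> pre_pure G v (\<xi> s) b s"
    and "s \<in> cg_st G"
  shows "v s \<le> val1_strat G (memoryless \<xi>) F s"
  using subfixpoint_le_prob_safe_upto[OF assms(1-4) _ assms(5)]
  by (intro val1_strat_greatest prob_safe_greatest)

text \<open>One horizon serves all states because there are finitely many.\<close>

lemma uniform_near_optimal_response:
  assumes "0 < e"
  obtains pf N where "\<And>t. pf t \<in> strategies2 G"
    and "\<And>t. t \<in> cg_st G \<Longrightarrow> prob_safe_upto G \<pi>1 (pf t) F t N < val1_strat G \<pi>1 F t + e"
proof -
  have "\<forall>t\<in>cg_st G. \<exists>\<pi>\<in>strategies2 G. prob_safe G \<pi>1 \<pi> F t < val1_strat G \<pi>1 F t + e"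
    using assms by (intro ballI val1_strat_less_imp_ex) auto
  then obtain f where f: "\<And>t. t \<in> cg_st G \<Longrightarrow>
      f t \<in> strategies2 G \<and> prob_safe G \<pi>1 (f t) F t < val1_strat G \<pi>1 F t + e"
    by metis
  define pf where "pf t = (if t \<in> cg_st G then f t else some_strategy2)" for t
  have pf: "pf t \<in> strategies2 G" for t
    using f some_strategy2 by (simp add: pf_def)
  have "\<forall>t\<in>cg_st G. \<exists>N. \<forall>n\<ge>N. prob_safe_upto G \<pi>1 (pf t) F t n < val1_strat G \<pi>1 F t + e"
    using f by (intro ballI prob_safe_less_imp_eventually) (simp add: pf_def)
  then obtain Nt where Nt: "\<And>t n. t \<in> cg_st G \<Longrightarrow> Nt t \<le> n \<Longrightarrow>
      prob_safe_upto G \<pi>1 (pf t) F t n < val1_strat G \<pi>1 F t + e"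
    by metis
  have "Nt t \<le> (\<Sum>t\<in>cg_st G. Nt t)" if "t \<in> cg_st G" for t
    using finite_states that by (intro member_le_sum) auto
  with Nt pf show thesis by (intro that) auto
qed

lemma val1_strat_le_pre_pure:
  assumes sel: "selector G \<xi>" and s: "s \<in> cg_st G" "s \<in> F" and b: "b \<in> cg_g2 G s"
  shows "val1_strat G (memoryless \<xi>) F s \<le> pre_pure G (val1_strat G (memoryless \<xi>) F) (\<xi> s) b s"
proof (rule field_le_epsilon)
  fix e :: real assume "0 < e"
  let ?w = "val1_strat G (memoryless \<xi>) F"
  obtain pf N where pf: "\<And>t. pf t \<in> strategies2 G"
    and N: "\<And>t. t \<in> cg_st G \<Longrightarrow> prob_safe_upto G (memoryless \<xi>) (pf t) F t N < ?w t + e"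
    using uniform_near_optimal_response[OF \<open>0 < e\<close>] by blast
  let ?\<pi>2 = "first_move_then s b pf"
  have d1: "set_pmf (\<xi> s) \<subseteq> cg_g1 G s" using selector_moves[OF sel s(1)] .
  have "?w s \<le> prob_safe_upto G (memoryless \<xi>) ?\<pi>2 F s (Suc N)"
    using val1_strat_le_prob_safe[OF first_move_then_strategies2[OF b pf]] prob_safe_le_upto
    by (rule order_trans)
  also have "\<dots> = pre_pure G (\<lambda>t. prob_safe_upto G (memoryless \<xi>) (pf t) F t N) (\<xi> s) b s"
    using s integral_round_eq_pre_pure[OF s(1) d1, of "return_pmf b"] b finite_moves2[OF s(1)]
    by (simp add: prob_safe_upto_Suc prob_safe_upto_first_move_then sum_pmf_return_mult del: pmf_return)
  also have "\<dots> \<le> pre_pure G (\<lambda>t. ?w t + e) (\<xi> s) b s"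
    using N by (intro pre_pure_mono) (auto intro: less_imp_le)
  also have "\<dots> = pre_pure G ?w (\<xi> s) b s + e"
    by (simp add: pre_pure_add pre_pure_const[OF s(1) d1 b])
  finally show "?w s \<le> pre_pure G ?w (\<xi> s) b s + e" .
qed

definition kunif_dists :: "nat \<Rightarrow> 's \<Rightarrow> 'm pmf set" where
  "kunif_dists k s = {d. set_pmf d \<subseteq> cg_g1 G s \<and> kunif_dist k d}"

lemma finite_kunif_dists:
  assumes s: "s \<in> cg_st G" shows "finite (kunif_dists k s)"
proof -
  define V where "V = (\<lambda>(i, j). real i / real j) ` ({0..k} \<times> {0..k})"
  have "inj_on (\<lambda>d. restrict (pmf d) (cg_g1 G s)) (kunif_dists k s)"
  proof (rule inj_onI, rule pmf_eqI)
    fix d1 d2 a assume d: "d1 \<in> kunif_dists k s" "d2 \<in> kunif_dists k s"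
      and eq: "restrict (pmf d1) (cg_g1 G s) = restrict (pmf d2) (cg_g1 G s)"
    show "pmf d1 a = pmf d2 a"
    proof (cases "a \<in> cg_g1 G s")
      case True then show ?thesis using fun_cong[OF eq, of a] by simp
    next
      case False
      then have "a \<notin> set_pmf d1" "a \<notin> set_pmf d2" using d by (auto simp: kunif_dists_def)
      then show ?thesis by (simp add: set_pmf_iff)
    qed
  qed
  moreover have "(\<lambda>d. restrict (pmf d) (cg_g1 G s)) ` kunif_dists k s \<subseteq> PiE (cg_g1 G s) (\<lambda>_. V)"
  proof clarify
    fix d assume d: "d \<in> kunif_dists k s"
    show "restrict (pmf d) (cg_g1 G s) \<in> PiE (cg_g1 G s) (\<lambda>_. V)"
    proof (rule PiE_I)
      fix a
      from d obtain i j where "i \<le> j" "j \<le> k" "pmf d a = real i / real j"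
        unfolding kunif_dists_def kunif_dist_def by blast
      then show "restrict (pmf d) (cg_g1 G s) a \<in> V" if "a \<in> cg_g1 G s"
        using that unfolding V_def by (auto intro!: image_eqI[where x="(i, j)"])
    qed auto
  qed
  then have "finite ((\<lambda>d. restrict (pmf d) (cg_g1 G s)) ` kunif_dists k s)"
    by (rule finite_subset) (auto simp: V_def intro: finite_PiE finite_moves1[OF s])
  ultimately show ?thesis using finite_imageD by blast
qed

lemma return_pmf_in_kunif_dists: "1 \<le> k \<Longrightarrow> a \<in> cg_g1 G s \<Longrightarrow> return_pmf a \<in> kunif_dists k s"
  unfolding kunif_dists_def kunif_dist_def
proof (intro CollectI conjI allI)
  fix a' assume "1 \<le> k"
  then show "\<exists>i j. i \<le> j \<and> j \<le> k \<and> pmf (return_pmf a) a' = real i / real j"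
    by (intro exI[where x="if a' = a then 1 else 0"] exI[where x="1::nat"]) auto
qed auto

lemma pre1k_eq_Max: "pre1k G k v s = Max ((\<lambda>d. pre1_sel G v d s) ` kunif_dists k s)"
  unfolding pre1k_def kunif_dists_def ..

lemma pre1_sel_le_pre1k: "s \<in> cg_st G \<Longrightarrow> d \<in> kunif_dists k s \<Longrightarrow> pre1_sel G v d s \<le> pre1k G k v s"
  unfolding pre1k_eq_Max by (intro Max_ge finite_imageI finite_kunif_dists) auto

lemma pre1k_attained: "1 \<le> k \<Longrightarrow> s \<in> cg_st G \<Longrightarrow> \<exists>d\<in>kunif_dists k s. pre1_sel G v d s = pre1k G k v s"
  unfolding pre1k_eq_Max
  using finite_kunif_dists return_pmf_in_kunif_dists moves1_nonempty
  by (metis (no_types, lifting) Max_in all_not_in_conv finite_imageI image_iff image_is_empty)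

lemma pre_pair_eq_sum: "pre_pair G v d d2 s = (\<Sum>b\<in>cg_g2 G s. pmf d2 b * pre_pure G v d b s)"
  unfolding pre_pair_def pre_pure_def sum_distrib_left sum_distrib_right
  by (subst sum.swap) (simp add: ac_simps)

lemma pre1_sel_eq_Min:
  assumes s: "s \<in> cg_st G"
  shows "pre1_sel G v d s = Min ((\<lambda>b. pre_pure G v d b s) ` cg_g2 G s)"
proof -
  let ?m = "Min ((\<lambda>b. pre_pure G v d b s) ` cg_g2 G s)"
  have fin: "finite ((\<lambda>b. pre_pure G v d b s) ` cg_g2 G s)" using finite_moves2[OF s] by simp
  obtain b0 where b0: "b0 \<in> cg_g2 G s" "pre_pure G v d b0 s = ?m"
    using Min_in[OF fin] moves2_nonempty[OF s] by fastforce
  have lower: "?m \<le> pre_pair G v d d2 s" if d2: "set_pmf d2 \<subseteq> cg_g2 G s" for d2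
  proof -
    have "?m = (\<Sum>b\<in>cg_g2 G s. pmf d2 b * ?m)"
      using sum_pmf_eq_1[OF finite_moves2[OF s] d2] by (simp add: sum_distrib_right[symmetric])
    also have "\<dots> \<le> (\<Sum>b\<in>cg_g2 G s. pmf d2 b * pre_pure G v d b s)"
      using fin by (intro sum_mono mult_left_mono Min_le) auto
    finally show ?thesis by (simp add: pre_pair_eq_sum)
  qed
  have attained: "pre_pair G v d (return_pmf b0) s = ?m"
    unfolding pre_pair_eq_sum b0(2)[symmetric] using finite_moves2[OF s] b0(1) by (rule sum_pmf_return_mult)
  show ?thesis
    unfolding pre1_sel_def
  proof (rule antisym)
    show "(INF d2\<in>{d2. set_pmf d2 \<subseteq> cg_g2 G s}. pre_pair G v d d2 s) \<le> ?m"
      unfolding attained[symmetric] using b0 lower by (intro cINF_lower bdd_belowI[where m="?m"]) auto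
    show "?m \<le> (INF d2\<in>{d2. set_pmf d2 \<subseteq> cg_g2 G s}. pre_pair G v d d2 s)"
      using lower b0 by (intro cINF_greatest) (auto intro!: exI[where x="return_pmf b0"])
  qed
qed

lemma pre1_sel_le_pre_pure: "s \<in> cg_st G \<Longrightarrow> b \<in> cg_g2 G s \<Longrightarrow> pre1_sel G v d s \<le> pre_pure G v d b s"
  unfolding pre1_sel_eq_Min using finite_moves2 by (intro Min_le) auto

lemma pre1_sel_attained: "s \<in> cg_st G \<Longrightarrow> \<exists>b\<in>cg_g2 G s. pre_pure G v d b s = pre1_sel G v d s"
  unfolding pre1_sel_eq_Min using finite_moves2 moves2_nonempty
  by (metis (no_types, lifting) Min_in finite_imageI image_iff image_is_empty)

lemma optsel_iff: "d \<in> optsel G k v s \<longleftrightarrow> d \<in> kunif_dists k s \<and> pre1_sel G v d s = pre1k G k v s"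
  unfolding optsel_def kunif_dists_def by auto

lemma optsel_nonempty: "1 \<le> k \<Longrightarrow> s \<in> cg_st G \<Longrightarrow> optsel G k v s \<noteq> {}"
  using pre1k_attained optsel_iff by blast

lemma countopt_nonempty: "s \<in> cg_st G \<Longrightarrow> d \<in> optsel G k v s \<Longrightarrow> countopt G k v s d \<noteq> {}"
  unfolding countopt_def using pre1_sel_attained[of s v d] optsel_iff[of d k v s] by auto

lemma pre1k_le_1:
  assumes k: "1 \<le> k" and s: "s \<in> cg_st G" and z1: "\<forall>t\<in>cg_st G. z t \<le> 1"
  shows "pre1k G k z s \<le> 1"
proof -
  obtain d where d: "d \<in> kunif_dists k s" "pre1_sel G z d s = pre1k G k z s"
    using pre1k_attained[OF k s] by blast
  obtain b where b: "b \<in> cg_g2 G s" using moves2_nonempty[OF s] by blast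
  have dsup: "set_pmf d \<subseteq> cg_g1 G s" using d by (auto simp: kunif_dists_def)
  have "pre1k G k z s \<le> pre_pure G z d b s" using d pre1_sel_le_pre_pure[OF s b] by metis
  also have "\<dots> \<le> pre_pure G (\<lambda>_. 1) d b s" using z1 by (intro pre_pure_mono) auto
  also have "\<dots> = 1" by (rule pre_pure_const[OF s dsup b])
  finally show ?thesis .
qed

subsection \<open>The turn-based game of optimal choices\<close>

lemma TB_simps [simp]:
  "cg_st (TB G k v) = tb_states G k v"
  "cg_g1 (TB G k v) (P1 s) = tb_succ G k v (P1 s)"
  "cg_g1 (TB G k v) (P2 s A B) = {P2 s A B}"
  "cg_g1 (TB G k v) (Rnd s A b) = {Rnd s A b}"
  "cg_g2 (TB G k v) (P1 s) = {P1 s}"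
  "cg_g2 (TB G k v) (P2 s A B) = tb_succ G k v (P2 s A B)"
  "cg_g2 (TB G k v) (Rnd s A b) = {Rnd s A b}"
  "cg_tr (TB G k v) (P1 s) x y = return_pmf x"
  "cg_tr (TB G k v) (P2 s A B) x y = return_pmf y"
  "cg_tr (TB G k v) (Rnd s A b) x y = pmf_of_set (tb_succ G k v (Rnd s A b))"
  by (simp_all add: TB_def)

lemma P1_in_tb_states [simp]: "P1 s \<in> tb_states G k v \<longleftrightarrow> s \<in> cg_st G"
  by (auto simp: tb_states_def)

lemma optselcount_moves:
  assumes "s \<in> cg_st G" and "(A, B) \<in> optselcount G k v s"
  shows "A \<noteq> {}" "A \<subseteq> cg_g1 G s" "B \<subseteq> cg_g2 G s"
  using assms set_pmf_not_empty by (auto simp: optselcount_def optsel_def countopt_def)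

lemma tb_succ_Rnd_finite_nonempty:
  assumes s: "s \<in> cg_st G" and AB: "(A, B) \<in> optselcount G k v s" and b: "b \<in> B"
  shows "finite (tb_succ G k v (Rnd s A b))" "tb_succ G k v (Rnd s A b) \<noteq> {}"
proof -
  have bG: "b \<in> cg_g2 G s" and A: "A \<noteq> {}" "A \<subseteq> cg_g1 G s"
    using optselcount_moves[OF s AB] b by auto
  then have "(\<Union>a\<in>A. set_pmf (cg_tr G s a b)) \<subseteq> cg_st G"
    using set_pmf_tr_subset[OF s _ bG] by blast
  then show "finite (tb_succ G k v (Rnd s A b))"
    by (auto intro: finite_subset[OF _ finite_states])
  show "tb_succ G k v (Rnd s A b) \<noteq> {}"
    using A(1) set_pmf_not_empty by fastforce
qed

lemma TB_moves1_nonempty: "1 \<le> k \<Longrightarrow> u \<in> tb_states G k v \<Longrightarrow> cg_g1 (TB G k v) u \<noteq> {}"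
  using optsel_nonempty[of k _ v] by (cases u) (fastforce simp: tb_states_def optselcount_def)+

lemma TB_moves2_nonempty: "u \<in> tb_states G k v \<Longrightarrow> cg_g2 (TB G k v) u \<noteq> {}"
  by (cases u) (auto simp: tb_states_def optselcount_def dest: countopt_nonempty)

lemma TB_strategies2_nonempty: "strategies2 (TB G k v) \<noteq> {}"
proof -
  have "(\<lambda>h. return_pmf (SOME x. x \<in> cg_g2 (TB G k v) (last h))) \<in> strategies2 (TB G k v)"
    unfolding strategies2_def using TB_moves2_nonempty by (auto intro: some_in_eq[THEN iffD2])
  then show ?thesis by blast
qed

lemma as_win_TB_safe: "u \<in> as_win (TB G k v) Fb \<Longrightarrow> u \<in> Fb"
  using TB_strategies2_nonempty[of k v] prob_safe_outside[of u Fb "TB G k v"]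
  unfolding as_win_def by fastforce

lemma as_win_states: "u \<in> as_win H Fb \<Longrightarrow> u \<in> cg_st H"
  unfolding as_win_def by auto

text \<open>The states of the turn-based game visited from Z when player 1 always chooses the pair
  (support, optimal counter-moves) of the selector \<xi>.\<close>

lemma TB_choice_set_closed:
  fixes \<xi> :: "'s \<Rightarrow> 'm pmf" and Z :: "'s set" and k :: nat and z :: "'s \<Rightarrow> real"
  defines "choice \<equiv> \<lambda>t. P2 t (set_pmf (\<xi> t)) (countopt G k z t (\<xi> t))"
  defines "C \<equiv> P1 ` Z \<union> choice ` Z \<union>
    {Rnd t (set_pmf (\<xi> t)) b | t b. t \<in> Z \<and> b \<in> countopt G k z t (\<xi> t)}"
  assumes Z: "Z \<subseteq> cg_st G"
    and opt: "\<And>t. t \<in> Z \<Longrightarrow> t \<in> F \<and> \<xi> t \<in> optsel G k z t \<and>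
       (\<forall>b\<in>countopt G k z t (\<xi> t). \<forall>a\<in>set_pmf (\<xi> t). set_pmf (cg_tr G t a b) \<subseteq> Z)"
    and \<sigma>: "\<And>t. t \<in> Z \<Longrightarrow> \<sigma> (P1 t) = choice t"
  shows "C \<subseteq> tb_states G k z" "C \<subseteq> TB_F G k z F"
    "\<forall>u\<in>C. \<forall>a\<in>set_pmf (return_pmf (\<sigma> u)). \<forall>b\<in>cg_g2 (TB G k z) u.
       set_pmf (cg_tr (TB G k z) u a b) \<subseteq> C"
proof -
  have osc: "(set_pmf (\<xi> t), countopt G k z t (\<xi> t)) \<in> optselcount G k z t" if "t \<in> Z" for t
    using opt[OF that] by (auto simp: optselcount_def)
  show C_states: "C \<subseteq> tb_states G k z"
    using Z osc unfolding C_def choice_def by (auto simp: tb_states_def)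
  show "C \<subseteq> TB_F G k z F"
    using C_states opt unfolding C_def TB_F_def choice_def by auto
  show "\<forall>u\<in>C. \<forall>a\<in>set_pmf (return_pmf (\<sigma> u)). \<forall>b\<in>cg_g2 (TB G k z) u.
      set_pmf (cg_tr (TB G k z) u a b) \<subseteq> C"
  proof (intro ballI)
    fix u a b assume u: "u \<in> C" and a: "a \<in> set_pmf (return_pmf (\<sigma> u))"
      and b: "b \<in> cg_g2 (TB G k z) u"
    show "set_pmf (cg_tr (TB G k z) u a b) \<subseteq> C"
    proof (cases u)
      case (P1 t)
      then show ?thesis using u a \<sigma> by (auto simp: C_def choice_def)
    next
      case (P2 t A B)
      then show ?thesis using u b by (auto simp: C_def choice_def)
    next
      case (Rnd t A c)
      then have tZ: "t \<in> Z" and A: "A = set_pmf (\<xi> t)" and c: "c \<in> countopt G k z t (\<xi> t)"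
        using u by (auto simp: C_def choice_def)
      have "tb_succ G k z u \<subseteq> P1 ` Z"
        using opt[OF tZ] A c Rnd by auto
      then have "tb_succ G k z u \<subseteq> C"
        unfolding C_def by blast
      moreover have "set_pmf (pmf_of_set (tb_succ G k z u)) = tb_succ G k z u"
        using tb_succ_Rnd_finite_nonempty[OF _ osc[OF tZ] c] tZ Z A Rnd
        by (intro set_pmf_of_set) auto
      ultimately show ?thesis using Rnd by simp
    qed
  qed
qed

lemma optimal_closed_set_as_win:
  assumes k: "1 \<le> k" and Z: "Z \<subseteq> cg_st G"
    and opt: "\<And>t. t \<in> Z \<Longrightarrow> t \<in> F \<and> \<xi> t \<in> optsel G k z t \<and>
       (\<forall>b\<in>countopt G k z t (\<xi> t). \<forall>a\<in>set_pmf (\<xi> t). set_pmf (cg_tr G t a b) \<subseteq> Z)"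
    and t: "t \<in> Z"
  shows "P1 t \<in> as_win (TB G k z) (TB_F G k z F)"
proof -
  let ?H = "TB G k z"
  define \<sigma> where "\<sigma> u = (if u \<in> P1 ` Z
      then P2 (tb_fst u) (set_pmf (\<xi> (tb_fst u))) (countopt G k z (tb_fst u) (\<xi> (tb_fst u)))
      else SOME x. x \<in> cg_g1 ?H u)" for u
  define C where "C = P1 ` Z \<union> (\<lambda>t. P2 t (set_pmf (\<xi> t)) (countopt G k z t (\<xi> t))) ` Z \<union>
    {Rnd t (set_pmf (\<xi> t)) b | t b. t \<in> Z \<and> b \<in> countopt G k z t (\<xi> t)}"
  have "\<sigma> (P1 t) = P2 t (set_pmf (\<xi> t)) (countopt G k z t (\<xi> t))" if "t \<in> Z" for t
    using that by (simp add: \<sigma>_def)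
  note C = TB_choice_set_closed[OF Z opt this, folded C_def]
  have "\<sigma> u \<in> cg_g1 ?H u" if "u \<in> cg_st ?H" for u
  proof (cases "u \<in> P1 ` Z")
    case True
    then show ?thesis using opt by (auto simp: \<sigma>_def optselcount_def)
  next
    case False
    then show ?thesis
      using TB_moves1_nonempty[OF k, of u z] that by (simp add: \<sigma>_def some_in_eq)
  qed
  then have "memoryless (\<lambda>u. return_pmf (\<sigma> u)) \<in> strategies1 ?H"
    by (rule strategies1_memoryless_pure)
  moreover have "C \<subseteq> cg_st ?H" and "P1 t \<in> C"
    using C(1) t by (auto simp: C_def)
  ultimately show ?thesis
    unfolding as_win_def using prob_safe_closed_set[OF _ C(2,3)] by blast
qed

text \<open>At a state of maximal gap, val(\<xi>) \<le> Pre(val(\<xi>)) and Pre_k(z) \<le> z leave no slack.\<close>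

lemma max_gap_optimal_closed:
  fixes \<xi> :: "'s \<Rightarrow> 'm pmf" and F :: "'s set" and \<Delta> :: real
  defines "w \<equiv> val1_strat G (memoryless \<xi>) F"
  assumes sel: "selector G \<xi>" and ku: "kunif_selector G F k \<xi>"
    and z0: "\<forall>t\<in>cg_st G - F. z t = 0" and z1: "\<forall>t\<in>W1 G F. z t = 1"
    and no_improve: "\<forall>s\<in>cg_st G - (W1 G F \<union> (cg_st G - F)). pre1k G k z s \<le> z s"
    and gap: "\<forall>u\<in>cg_st G. w u - z u \<le> \<Delta>" and pos: "0 < \<Delta>"
    and t: "t \<in> cg_st G" "w t - z t = \<Delta>"
  shows "t \<in> F \<and> t \<notin> W1 G F \<and> \<xi> t \<in> optsel G k z t \<and>
    (\<forall>b\<in>countopt G k z t (\<xi> t). \<forall>a\<in>set_pmf (\<xi> t).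
       set_pmf (cg_tr G t a b) \<subseteq> {u \<in> cg_st G. w u - z u = \<Delta>})"
proof -
  have tF: "t \<in> F"
    using t pos z0 val1_strat_outside[of t F "memoryless \<xi>"] by (force simp: w_def)
  have tW: "t \<notin> W1 G F"
    using t pos z1 val1_strat_le_1[of "memoryless \<xi>" F t] by (force simp: w_def)
  let ?d = "\<xi> t"
  have d: "set_pmf ?d \<subseteq> cg_g1 G t" using selector_moves[OF sel t(1)] .
  have dK: "?d \<in> kunif_dists k t"
    using ku t(1) tF tW d by (auto simp: kunif_dists_def kunif_selector_def)
  have split: "w t \<le> pre_pure G z ?d b t + pre_pure G (\<lambda>u. w u - z u) ?d b t"
    if b: "b \<in> cg_g2 G t" for b
    using val1_strat_le_pre_pure[OF sel t(1) tF b] pre_pure_add[of z "\<lambda>u. w u - z u" ?d b t]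
    by (simp add: w_def)
  have gap_pre: "pre_pure G (\<lambda>u. w u - z u) ?d b t \<le> \<Delta>" if b: "b \<in> cg_g2 G t" for b
    using pre_pure_mono[of "\<lambda>u. w u - z u" "\<lambda>_. \<Delta>" ?d b t] gap pre_pure_const[OF t(1) d b] by simp
  obtain b0 where b0: "b0 \<in> cg_g2 G t" "pre_pure G z ?d b0 t = pre1_sel G z ?d t"
    using pre1_sel_attained[OF t(1)] by blast
  have "pre1_sel G z ?d t \<le> pre1k G k z t" by (rule pre1_sel_le_pre1k[OF t(1) dK])
  moreover have "pre1k G k z t \<le> z t" using no_improve t(1) tF tW by auto
  moreover have "w t \<le> pre1_sel G z ?d t + \<Delta>" using split[OF b0(1)] gap_pre[OF b0(1)] b0(2) by simp
  ultimately have opt: "pre1_sel G z ?d t = pre1k G k z t" and fixed: "pre1k G k z t = z t"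
    using t(2) by linarith+
  have "set_pmf (cg_tr G t a b) \<subseteq> {u \<in> cg_st G. w u - z u = \<Delta>}"
    if b: "b \<in> countopt G k z t ?d" and a: "a \<in> set_pmf ?d" for a b
  proof
    fix u assume u: "u \<in> set_pmf (cg_tr G t a b)"
    have bG: "b \<in> cg_g2 G t" and "pre_pure G z ?d b t = pre1k G k z t"
      using b by (auto simp: countopt_def)
    then have "\<Delta> \<le> pre_pure G (\<lambda>u. w u - z u) ?d b t" using split[OF bG] fixed t(2) by simp
    with gap have "w u - z u = \<Delta>"
      by (intro pre_pure_ge_bound_imp_eq[OF t(1) d bG _ _ a u, where f="\<lambda>u. w u - z u"])
    moreover have "u \<in> cg_st G" using set_pmf_tr_subset[OF t(1) _ bG] a d u by blast
    ultimately show "u \<in> {u \<in> cg_st G. w u - z u = \<Delta>}" by simp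
  qed
  with tF tW dK opt show ?thesis by (simp add: optsel_iff)
qed

lemma val1_strat_le_of_no_improvement:
  assumes k: "1 \<le> k" and sel: "selector G \<xi>" and ku: "kunif_selector G F k \<xi>"
    and z0: "\<forall>t\<in>cg_st G - F. z t = 0" and z1: "\<forall>t\<in>W1 G F. z t = 1"
    and no_improve: "\<forall>s\<in>cg_st G - (W1 G F \<union> (cg_st G - F)). pre1k G k z s \<le> z s"
    and no_switch: "\<forall>s\<in>cg_st G. P1 s \<in> as_win (TB G k z) (TB_F G k z F) \<longrightarrow> s \<in> W1 G F"
    and s: "s \<in> cg_st G"
  shows "val1_strat G (memoryless \<xi>) F s \<le> z s"
proof (rule ccontr)
  assume greater: "\<not> ?thesis"
  define w where "w = val1_strat G (memoryless \<xi>) F"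
  define \<Delta> where "\<Delta> = Max ((\<lambda>u. w u - z u) ` cg_st G)"
  define Z where "Z = {u \<in> cg_st G. w u - z u = \<Delta>}"
  have gap: "\<forall>u\<in>cg_st G. w u - z u \<le> \<Delta>"
    unfolding \<Delta>_def using finite_states by auto
  have pos: "0 < \<Delta>" using gap s greater by (force simp: w_def)
  obtain t where t: "t \<in> Z"
    using Max_in[of "(\<lambda>u. w u - z u) ` cg_st G"] finite_states s
    unfolding Z_def \<Delta>_def by fastforce
  note closed = max_gap_optimal_closed[OF sel ku z0 z1 no_improve gap[unfolded w_def] pos,
      folded w_def Z_def]
  have "P1 t \<in> as_win (TB G k z) (TB_F G k z F)"
    by (rule optimal_closed_set_as_win[OF k _ _ t]) (use closed in \<open>auto simp: Z_def\<close>)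
  with no_switch closed t show False by (auto simp: Z_def)
qed

text \<open>Player 2 forces the play from P1 s through the random state Rnd s A b and then plays
  \<pi>2' afresh from the successor drawn there.\<close>

lemma prob_safe_upto_TB_detour:
  fixes \<sigma> :: "('s, 'm) tbst \<Rightarrow> ('s, 'm) tbst" and k :: nat and z :: "'s \<Rightarrow> real"
    and s :: 's and A :: "'m set" and b :: 'm
  defines "\<sigma>m \<equiv> \<lambda>h. return_pmf (\<sigma> (last h))"
    and "succ \<equiv> tb_succ G k z (Rnd s A b)"
  assumes \<sigma>s: "\<sigma> (P1 s) = P2 s A B" and succ: "finite succ" "succ \<noteq> {}"
  shows "prob_safe_upto (TB G k z) \<sigma>m
      (restart_after [P1 s, P2 s A B] (Rnd s A b) [P1 s, P2 s A B, Rnd s A b] \<pi>2') Fb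
      (P1 s) (Suc (Suc (Suc N))) \<le>
    (\<Sum>u\<in>succ. prob_safe_upto (TB G k z) \<sigma>m \<pi>2' Fb u N) / card succ"
proof -
  let ?H = "TB G k z"
  define \<pi>2 where "\<pi>2 = restart_after [P1 s, P2 s A B] (Rnd s A b) [P1 s, P2 s A B, Rnd s A b] \<pi>2'"
  let ?\<sigma>3 = "\<lambda>h. \<sigma>m (P1 s # P2 s A B # Rnd s A b # h)"
    and ?\<pi>3 = "\<lambda>h. \<pi>2 (P1 s # P2 s A B # Rnd s A b # h)"
  have restart: "prob_safe_upto ?H ?\<sigma>3 ?\<pi>3 Fb u N = prob_safe_upto ?H \<sigma>m \<pi>2' Fb u N" for u
    unfolding prob_safe_upto_def
    by (rule arg_cong[where f="\<lambda>p. measure_pmf.prob p _"], rule hist_pmf_cong)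
       (auto simp: \<sigma>m_def \<pi>2_def restart_after_def neq_Nil_conv)
  have "prob_safe_upto ?H \<sigma>m \<pi>2 Fb (P1 s) (Suc (Suc (Suc N))) \<le>
      (\<integral>u. prob_safe_upto ?H ?\<sigma>3 ?\<pi>3 Fb u N \<partial>pmf_of_set succ)"
    using prob_safe_upto_Suc_le_fixed_transition[of "\<lambda>h. \<sigma>m (P1 s # P2 s A B # h)"
        "Rnd s A b" "\<lambda>h. \<pi>2 (P1 s # P2 s A B # h)" ?H "pmf_of_set succ" Fb N]
      prob_safe_upto_Suc_le_fixed_transition[of "\<lambda>h. \<sigma>m (P1 s # h)" "P2 s A B"
        "\<lambda>h. \<pi>2 (P1 s # h)" ?H "return_pmf (Rnd s A b)" Fb "Suc N"]
      prob_safe_upto_Suc_le_fixed_transition[of \<sigma>m "P1 s" \<pi>2 ?H "return_pmf (P2 s A B)" Fb "Suc (Suc N)"]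
    by (simp add: \<sigma>m_def \<sigma>s \<pi>2_def restart_after_def succ_def del: tb_succ.simps)
  also have "\<dots> = (\<Sum>u\<in>succ. prob_safe_upto ?H \<sigma>m \<pi>2' Fb u N) / card succ"
    unfolding restart using succ by (intro integral_pmf_of_set) auto
  finally show ?thesis unfolding \<pi>2_def .
qed

text \<open>A counter-strategy spoiling the play from the successor t would, after the detour through the
  random state, spoil it from s as well.\<close>

lemma as_win_TB_successor:
  assumes pas: "pure_as_strategy (TB G k z) (TB_F G k z F) \<sigma>"
    and s: "s \<in> cg_st G" and win: "P1 s \<in> as_win (TB G k z) (TB_F G k z F)"
    and \<sigma>s: "\<sigma> (P1 s) = P2 s A B" and b: "b \<in> B" and a: "a \<in> A"
    and t: "t \<in> set_pmf (cg_tr G s a b)"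
  shows "P1 t \<in> as_win (TB G k z) (TB_F G k z F)"
proof -
  let ?H = "TB G k z" and ?Fb = "TB_F G k z F"
  define \<sigma>m where "\<sigma>m = (\<lambda>h. return_pmf (\<sigma> (last h)) :: ('s, 'm) tbst pmf)"
  define succ where "succ = tb_succ G k z (Rnd s A b)"
  have "\<sigma> (P1 s) \<in> cg_g1 ?H (P1 s)"
    using pas s unfolding pure_as_strategy_def by (metis P1_in_tb_states TB_simps(1))
  then have AB: "(A, B) \<in> optselcount G k z s"
    using \<sigma>s by simp
  note succ_fin = tb_succ_Rnd_finite_nonempty[OF s AB b, folded succ_def]
  have t_succ: "P1 t \<in> succ" unfolding succ_def using a t by auto
  have \<sigma>m: "\<sigma>m \<in> strategies1 ?H"
    using pas unfolding pure_as_strategy_def strategies1_def \<sigma>m_def by auto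
  have "prob_safe ?H \<sigma>m \<pi>2' ?Fb (P1 t) = 1" if \<pi>2': "\<pi>2' \<in> strategies2 ?H" for \<pi>2'
  proof (rule ccontr)
    assume "prob_safe ?H \<sigma>m \<pi>2' ?Fb (P1 t) \<noteq> 1"
    then have "prob_safe ?H \<sigma>m \<pi>2' ?Fb (P1 t) < 1"
      using prob_safe_le_1[of ?H \<sigma>m \<pi>2' ?Fb "P1 t"] by linarith
    then obtain N where N: "prob_safe_upto ?H \<sigma>m \<pi>2' ?Fb (P1 t) N < 1"
      using prob_safe_less_imp_eventually by (meson order_refl)
    define \<pi>2 where "\<pi>2 = restart_after [P1 s, P2 s A B] (Rnd s A b) [P1 s, P2 s A B, Rnd s A b] \<pi>2'"
    have \<pi>2: "\<pi>2 \<in> strategies2 ?H"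
      unfolding \<pi>2_def using \<pi>2' b by (intro restart_after_strategies2) auto
    have "(\<Sum>u\<in>succ. prob_safe_upto ?H \<sigma>m \<pi>2' ?Fb u N) / card succ < 1"
    proof -
      have "(\<Sum>u\<in>succ. prob_safe_upto ?H \<sigma>m \<pi>2' ?Fb u N) < (\<Sum>u\<in>succ. 1)"
        using succ_fin t_succ N by (intro sum_strict_mono_ex1) (auto simp: prob_safe_upto_le_1)
      then show ?thesis using succ_fin by (simp add: card_gt_0_iff)
    qed
    then have "prob_safe_upto ?H \<sigma>m \<pi>2 ?Fb (P1 s) (Suc (Suc (Suc N))) < 1"
      using prob_safe_upto_TB_detour[where \<sigma>=\<sigma> and s=s and A=A and k=k and z=z and b=b,
          OF \<sigma>s succ_fin[unfolded succ_def], of \<pi>2' ?Fb N, folded \<sigma>m_def succ_def]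
      unfolding \<pi>2_def by linarith
    then have "prob_safe ?H \<sigma>m \<pi>2 ?Fb (P1 s) < 1"
      using prob_safe_le_upto[of ?H \<sigma>m \<pi>2 ?Fb "P1 s" "Suc (Suc (Suc N))"] by linarith
    moreover have "prob_safe ?H \<sigma>m \<pi>2 ?Fb (P1 s) = 1"
      using pas win \<pi>2 unfolding pure_as_strategy_def \<sigma>m_def by blast
    ultimately show False by simp
  qed
  moreover have "P1 t \<in> cg_st ?H"
    using set_pmf_tr_subset[OF s, of a b] optselcount_moves[OF s AB] a b t by auto
  moreover have "\<sigma>m = memoryless (\<lambda>u. return_pmf (\<sigma> u))"
    by (simp add: \<sigma>m_def memoryless_def)
  ultimately show ?thesis
    using \<sigma>m unfolding as_win_def by auto
qed

subsection \<open>Improvement steps\<close>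

lemma pre1_sel_greatest:
  "s \<in> cg_st G \<Longrightarrow> (\<And>b. b \<in> cg_g2 G s \<Longrightarrow> c \<le> pre_pure G v d b s) \<Longrightarrow> c \<le> pre1_sel G v d s"
  using pre1_sel_attained by metis

lemma pre1k_eq_of_no_improvement:
  fixes \<gamma> :: "'s \<Rightarrow> 'm pmf" and F :: "'s set"
  defines "z \<equiv> val1_strat G (memoryless \<gamma>) F"
  assumes sel: "selector G \<gamma>" and ku: "kunif_selector G F k \<gamma>"
    and s: "s \<in> cg_st G - (W1 G F \<union> (cg_st G - F))" and no_improve: "pre1k G k z s \<le> z s"
  shows "pre1k G k z s = z s"
proof -
  have "z s \<le> pre1_sel G z (\<gamma> s) s"
    using val1_strat_le_pre_pure[OF sel] s unfolding z_def by (intro pre1_sel_greatest) auto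
  also have "\<dots> \<le> pre1k G k z s"
    using ku selector_moves[OF sel] s
    by (intro pre1_sel_le_pre1k) (auto simp: kunif_dists_def kunif_selector_def)
  finally show ?thesis using no_improve by simp
qed

lemma val1_strat_le_pre_pure_unchanged:
  fixes \<gamma> :: "'s \<Rightarrow> 'm pmf" and F :: "'s set"
  defines "z \<equiv> val1_strat G (memoryless \<gamma>) F"
  assumes sel: "selector G \<gamma>" and s: "s \<in> cg_st G \<inter> F" and b: "b \<in> cg_g2 G s"
    and same: "\<gamma>' s = \<gamma> s" and le: "\<forall>t\<in>cg_st G. z t \<le> v t"
  shows "z s \<le> pre_pure G v (\<gamma>' s) b s"
  using val1_strat_le_pre_pure[OF sel _ _ b] pre_pure_mono[OF le] s same
  unfolding z_def by (metis IntD1 IntD2 order_trans)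

text \<open>Raising z by the smallest gain Pre_k(z) - z on the improved states gives a sub-fixpoint of
  the new selector.\<close>

lemma val1_strat_increases_of_improve_set:
  fixes \<gamma> :: "'s \<Rightarrow> 'm pmf" and F :: "'s set"
  defines "z \<equiv> val1_strat G (memoryless \<gamma>) F"
  assumes k: "1 \<le> k" and sel: "selector G \<gamma>" and sel': "selector G \<gamma>'"
    and nonempty: "improve_set G F k z \<noteq> {}"
    and same: "\<forall>s. s \<notin> improve_set G F k z \<longrightarrow> \<gamma>' s = \<gamma> s"
    and opt: "\<forall>s\<in>improve_set G F k z. \<gamma>' s \<in> optsel G k z s"
  shows "\<exists>s\<in>cg_st G. z s < val1_strat G (memoryless \<gamma>') F s"
proof -
  define I where "I = improve_set G F k z"
  have I: "I \<subseteq> cg_st G \<inter> F" "\<And>s. s \<in> I \<Longrightarrow> z s < pre1k G k z s"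
    by (auto simp: I_def improve_set_def)
  have "finite I" using I(1) finite_states finite_subset by blast
  then obtain g where g: "0 < g" "\<forall>s\<in>I. g \<le> pre1k G k z s - z s"
    using finite_positive_lower_bound[of I "\<lambda>s. pre1k G k z s - z s"] I(2) by (metis diff_gt_0_iff_gt)
  obtain s0 where s0: "s0 \<in> I" using nonempty by (auto simp: I_def)
  define v where "v t = z t + (if t \<in> I then g else 0)" for t
  have vz: "\<forall>t\<in>cg_st G. z t \<le> v t" using g by (auto simp: v_def)
  have "v s0 \<le> val1_strat G (memoryless \<gamma>') F s0"
  proof (rule subfixpoint_le_val1_strat[OF sel'])
    show "\<forall>t\<in>cg_st G. 0 \<le> v t \<and> v t \<le> 1"
    proof
      fix t assume t: "t \<in> cg_st G"
      have "z t \<le> 1" "0 \<le> z t" by (simp_all add: z_def val1_strat_le_1 val1_strat_nonneg)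
      then show "0 \<le> v t \<and> v t \<le> 1"
        using g pre1k_le_1[OF k t, of z] by (auto simp: v_def z_def val1_strat_le_1)
    qed
    show "\<forall>t\<in>cg_st G - F. v t = 0" using val1_strat_outside I(1) by (auto simp: v_def z_def)
    show "\<forall>s\<in>cg_st G \<inter> F. \<forall>b\<in>cg_g2 G s. v s \<le> pre_pure G v (\<gamma>' s) b s"
    proof (intro ballI)
      fix s b assume s: "s \<in> cg_st G \<inter> F" and b: "b \<in> cg_g2 G s"
      show "v s \<le> pre_pure G v (\<gamma>' s) b s"
      proof (cases "s \<in> I")
        case True
        have "v s \<le> pre1_sel G z (\<gamma>' s) s"
          using g True opt by (auto simp: v_def I_def optsel_def)
        also have "\<dots> \<le> pre_pure G v (\<gamma>' s) b s"
          using pre1_sel_le_pre_pure[of s b z] pre_pure_mono[OF vz] s b by (meson IntD1 order_trans)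
        finally show ?thesis .
      next
        case False
        then have "v s = z s" by (simp add: v_def)
        also have "\<dots> \<le> pre_pure G v (\<gamma>' s) b s"
          using val1_strat_le_pre_pure_unchanged[OF sel s b, of \<gamma>' v] same False vz
          by (simp add: I_def z_def)
        finally show ?thesis .
      qed
    qed
  qed (use s0 I(1) in auto)
  then show ?thesis using s0 I(1) g by (force simp: v_def)
qed

lemma optsel_countopt_gap:
  assumes U: "U \<subseteq> cg_st G" and opt: "\<forall>s\<in>U. \<gamma>' s \<in> optsel G k z s"
  obtains g where "0 < g" "g \<le> 1"
    "\<forall>s\<in>U. \<forall>b\<in>cg_g2 G s - countopt G k z s (\<gamma>' s). pre1k G k z s + g \<le> pre_pure G z (\<gamma>' s) b s"
proof -
  define PS where "PS = Sigma U (\<lambda>s. cg_g2 G s - countopt G k z s (\<gamma>' s))"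
  have "finite PS"
    unfolding PS_def using U finite_states finite_moves2
    by (intro finite_SigmaI) (auto intro: finite_subset)
  moreover have "\<forall>p\<in>PS. 0 < pre_pure G z (\<gamma>' (fst p)) (snd p) (fst p) - pre1k G k z (fst p)"
  proof clarify
    fix s b assume "(s, b) \<in> PS"
    then have s: "s \<in> U" and b: "b \<in> cg_g2 G s" "b \<notin> countopt G k z s (\<gamma>' s)"
      by (auto simp: PS_def)
    have "pre1k G k z s = pre1_sel G z (\<gamma>' s) s" using opt s by (auto simp: optsel_def)
    also have "\<dots> \<le> pre_pure G z (\<gamma>' s) b s" using pre1_sel_le_pre_pure U s b by blast
    finally show "0 < pre_pure G z (\<gamma>' (fst (s, b))) (snd (s, b)) (fst (s, b)) - pre1k G k z (fst (s, b))"
      using b by (auto simp: countopt_def)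
  qed
  ultimately obtain g where g: "0 < g" "g \<le> 1"
    "\<forall>p\<in>PS. g \<le> pre_pure G z (\<gamma>' (fst p)) (snd p) (fst p) - pre1k G k z (fst p)"
    using finite_positive_lower_bound[of PS
        "\<lambda>p. pre_pure G z (\<gamma>' (fst p)) (snd p) (fst p) - pre1k G k z (fst p)"]
    by blast
  show thesis
  proof (rule that[OF g(1,2)], intro ballI)
    fix s b assume "s \<in> U" "b \<in> cg_g2 G s - countopt G k z s (\<gamma>' s)"
    then have "(s, b) \<in> PS" by (simp add: PS_def)
    with g(3) have "g \<le> pre_pure G z (\<gamma>' s) b s - pre1k G k z s" by fastforce
    then show "pre1k G k z s + g \<le> pre_pure G z (\<gamma>' s) b s" by simp
  qed
qed

lemma raise_subfixpoint:
  fixes \<gamma> :: "'s \<Rightarrow> 'm pmf" and F :: "'s set" and U :: "'s set" and g :: real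
  defines "z \<equiv> val1_strat G (memoryless \<gamma>) F"
  defines "v \<equiv> \<lambda>t. z t + g * (if t \<in> U then 1 - z t else 0)"
  assumes sel: "selector G \<gamma>" and sel': "selector G \<gamma>'" and U: "U \<subseteq> cg_st G \<inter> F"
    and same: "\<forall>s. s \<notin> U \<longrightarrow> \<gamma>' s = \<gamma> s" and z_W1: "\<forall>t\<in>W1 G F. z t = 1"
    and g: "0 < g" "g \<le> 1"
    and moves: "\<forall>s\<in>U. \<forall>b\<in>cg_g2 G s.
       (pre_pure G z (\<gamma>' s) b s = z s \<and>
          (\<forall>a\<in>set_pmf (\<gamma>' s). set_pmf (cg_tr G s a b) \<subseteq> U \<union> W1 G F))
       \<or> z s + g \<le> pre_pure G z (\<gamma>' s) b s"
  shows "\<forall>s\<in>cg_st G \<inter> F. \<forall>b\<in>cg_g2 G s. v s \<le> pre_pure G v (\<gamma>' s) b s"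
proof (intro ballI)
  fix s b assume s: "s \<in> cg_st G \<inter> F" and b: "b \<in> cg_g2 G s"
  define f where "f t = (if t \<in> U then 1 - z t else 0)" for t
  have v: "v t = z t + g * f t" for t by (simp add: v_def f_def)
  have pre_v: "pre_pure G v d b s = pre_pure G z d b s + g * pre_pure G f d b s" for d b s
    unfolding v_def f_def[symmetric] pre_pure_add pre_pure_cmult ..
  have z01: "0 \<le> z t" "z t \<le> 1" for t
    by (simp_all add: z_def val1_strat_nonneg val1_strat_le_1)
  have vz: "\<forall>t\<in>cg_st G. z t \<le> v t" using g z01 by (auto simp: v f_def)
  consider "s \<notin> U" | "s \<in> U" "pre_pure G z (\<gamma>' s) b s = z s"
      "\<forall>a\<in>set_pmf (\<gamma>' s). set_pmf (cg_tr G s a b) \<subseteq> U \<union> W1 G F"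
    | "s \<in> U" "z s + g \<le> pre_pure G z (\<gamma>' s) b s"
    using moves b by blast
  then show "v s \<le> pre_pure G v (\<gamma>' s) b s"
  proof cases
    case 1
    then show ?thesis
      using val1_strat_le_pre_pure_unchanged[OF sel s b, of \<gamma>' v] same vz
      by (simp add: v f_def z_def)
  next
    case 2
    have "pre_pure G f (\<gamma>' s) b s = pre_pure G (\<lambda>t. 1 + (-1) * z t) (\<gamma>' s) b s"
      using 2 z_W1 by (intro pre_pure_cong) (auto simp: f_def)
    also have "\<dots> = 1 - z s"
      using selector_moves[OF sel'] s b
      unfolding pre_pure_add pre_pure_cmult 2(2) by (simp add: pre_pure_const)
    finally show ?thesis using 2 by (simp add: pre_v v f_def)
  next
    case 3
    moreover have "v s \<le> z s + g"
      using g z01[of s] by (simp add: v f_def mult_left_le)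
    moreover have "pre_pure G z (\<gamma>' s) b s \<le> pre_pure G v (\<gamma>' s) b s"
      using vz by (rule pre_pure_mono)
    ultimately show ?thesis by linarith
  qed
qed

text \<open>Optimal counter-moves keep the play in U or W1, and all other counter-moves gain a fixed
  amount, so z can be raised on U.\<close>

lemma val1_strat_increases_of_as_win_switch:
  fixes \<gamma> :: "'s \<Rightarrow> 'm pmf" and F :: "'s set" and k :: nat
  defines "z \<equiv> val1_strat G (memoryless \<gamma>) F"
  defines "U \<equiv> {s \<in> cg_st G. P1 s \<in> as_win (TB G k z) (TB_F G k z F)} - W1 G F"
  assumes sel: "selector G \<gamma>" and sel': "selector G \<gamma>'" and ku: "kunif_selector G F k \<gamma>"
    and no_improve: "improve_set G F k z = {}" and nonempty: "U \<noteq> {}"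
    and pas: "pure_as_strategy (TB G k z) (TB_F G k z F) \<sigma>"
    and same: "\<forall>s. s \<notin> U \<longrightarrow> \<gamma>' s = \<gamma> s"
    and switch: "\<forall>s\<in>U. \<exists>A B. \<sigma> (P1 s) = P2 s A B \<and> \<gamma>' s \<in> optsel G k z s \<and>
                           set_pmf (\<gamma>' s) = A \<and> countopt G k z s (\<gamma>' s) = B"
    and z_W1: "\<forall>t\<in>W1 G F. z t = 1" and z_less: "\<forall>t\<in>cg_st G - W1 G F. z t < 1"
  shows "\<exists>s\<in>cg_st G. z s < val1_strat G (memoryless \<gamma>') F s"
proof -
  have U: "U \<subseteq> cg_st G \<inter> F - W1 G F"
    using as_win_TB_safe unfolding U_def by (fastforce simp: TB_F_def)
  have fixed: "pre1k G k z s = z s" if "s \<in> U" for s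
    using pre1k_eq_of_no_improvement[OF sel ku, of s] no_improve U that
    unfolding z_def improve_set_def by fastforce
  have closed: "set_pmf (cg_tr G s a b) \<subseteq> U \<union> W1 G F"
    if s: "s \<in> U" and b: "b \<in> countopt G k z s (\<gamma>' s)" and a: "a \<in> set_pmf (\<gamma>' s)" for s a b
  proof
    fix t assume t: "t \<in> set_pmf (cg_tr G s a b)"
    obtain A B where "\<sigma> (P1 s) = P2 s A B" "set_pmf (\<gamma>' s) = A" "countopt G k z s (\<gamma>' s) = B"
      using switch s by blast
    then have "P1 t \<in> as_win (TB G k z) (TB_F G k z F)"
      using as_win_TB_successor[OF pas _ _ _ _ _ t] s a b U by (auto simp: U_def)
    then show "t \<in> U \<union> W1 G F" using as_win_states[of "P1 t" "TB G k z"] by (auto simp: U_def)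
  qed
  obtain g where g: "0 < g" "g \<le> 1"
    "\<forall>s\<in>U. \<forall>b\<in>cg_g2 G s - countopt G k z s (\<gamma>' s). pre1k G k z s + g \<le> pre_pure G z (\<gamma>' s) b s"
    using optsel_countopt_gap[of U \<gamma>' k z] U switch by blast
  define v where "v = (\<lambda>t. z t + g * (if t \<in> U then 1 - z t else 0))"
  have moves: "\<forall>s\<in>U. \<forall>b\<in>cg_g2 G s.
      (pre_pure G z (\<gamma>' s) b s = z s \<and>
         (\<forall>a\<in>set_pmf (\<gamma>' s). set_pmf (cg_tr G s a b) \<subseteq> U \<union> W1 G F))
      \<or> z s + g \<le> pre_pure G z (\<gamma>' s) b s"
  proof (intro ballI)
    fix s b assume s: "s \<in> U" and b: "b \<in> cg_g2 G s"
    show "(pre_pure G z (\<gamma>' s) b s = z s \<and>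
         (\<forall>a\<in>set_pmf (\<gamma>' s). set_pmf (cg_tr G s a b) \<subseteq> U \<union> W1 G F))
      \<or> z s + g \<le> pre_pure G z (\<gamma>' s) b s"
      using closed[OF s, of b] fixed[OF s] g(3)[rule_format, OF s, of b] b unfolding countopt_def by auto
  qed
  have "\<forall>s\<in>cg_st G \<inter> F. \<forall>b\<in>cg_g2 G s. v s \<le> pre_pure G v (\<gamma>' s) b s"
    unfolding v_def z_def
    by (rule raise_subfixpoint[OF sel sel' _ same _ g(1,2) moves[unfolded z_def]])
       (use U z_W1 in \<open>auto simp: z_def\<close>)
  obtain s0 where s0: "s0 \<in> U" using nonempty by blast
  have "v s0 \<le> val1_strat G (memoryless \<gamma>') F s0"
  proof (rule subfixpoint_le_val1_strat[OF sel'])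
    show "\<forall>t\<in>cg_st G. 0 \<le> v t \<and> v t \<le> 1"
    proof
      fix t
      have "0 \<le> z t" "z t \<le> 1" by (simp_all add: z_def val1_strat_nonneg val1_strat_le_1)
      then show "0 \<le> v t \<and> v t \<le> 1"
        using g mult_left_le_one_le[of "1 - z t" g] by (auto simp: v_def)
    qed
    show "\<forall>t\<in>cg_st G - F. v t = 0"
      using U val1_strat_outside by (auto simp: v_def z_def)
  qed (use s0 U \<open>\<forall>s\<in>cg_st G \<inter> F. _\<close> in auto)
  moreover have "z s0 < v s0" using s0 U z_less g by (auto simp: v_def)
  ultimately show ?thesis using s0 U by force
qed

lemma val1_strat_le_val1: "selector G \<xi> \<Longrightarrow> val1_strat G (memoryless \<xi>) F t \<le> val1 G F t"
  unfolding val1_def using memoryless_strategies1 val1_strat_le_1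
  by (intro cSUP_upper bdd_aboveI[where M=1]) auto

lemma val1_le_1: "selector G \<xi> \<Longrightarrow> val1 G F t \<le> 1"
  unfolding val1_def using memoryless_strategies1 val1_strat_le_1 by (intro cSUP_least) auto

lemma val1_strat_less_1:
  "selector G \<xi> \<Longrightarrow> t \<in> cg_st G - W1 G F \<Longrightarrow> val1_strat G (memoryless \<xi>) F t < 1"
  using val1_strat_le_val1[of \<xi> F t] val1_le_1[of \<xi> F t] by (force simp: W1_def)

lemma W1_subset: "selector G \<xi> \<Longrightarrow> W1 G F \<subseteq> F"
proof
  fix t assume sel: "selector G \<xi>" and t: "t \<in> W1 G F"
  show "t \<in> F"
  proof (rule ccontr)
    assume "t \<notin> F"
    then have "val1 G F t = (SUP \<pi>1\<in>strategies1 G. 0 :: real)"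
      unfolding val1_def by (simp add: val1_strat_outside)
    also have "\<dots> = 0" using memoryless_strategies1[OF sel] by (intro cSUP_const) blast
    finally show False using t by (simp add: W1_def)
  qed
qed

text \<open>With W1 absorbing, the indicator of W1 is a sub-fixpoint of every selector.\<close>

lemma val1_strat_W1:
  assumes sel: "selector G \<xi>"
    and absorbing: "\<forall>s \<in> W1 G F. \<forall>a\<in>cg_g1 G s. \<forall>b\<in>cg_g2 G s. cg_tr G s a b = return_pmf s"
    and t: "t \<in> W1 G F"
  shows "val1_strat G (memoryless \<xi>) F t = 1"
proof (rule antisym)
  define v where "v u = (if u \<in> W1 G F then 1 else 0 :: real)" for u
  have sub: "v s \<le> pre_pure G v (\<xi> s) b s" if s: "s \<in> cg_st G" and b: "b \<in> cg_g2 G s" for s b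
  proof (cases "s \<in> W1 G F")
    case True
    have "pre_pure G v (\<xi> s) b s = pre_pure G (\<lambda>_. 1) (\<xi> s) b s"
      using absorbing True b selector_moves[OF sel s] by (intro pre_pure_cong) (auto simp: v_def)
    then show ?thesis using pre_pure_const[OF s selector_moves[OF sel s] b] True by (simp add: v_def)
  next
    case False
    have "pre_pure G (\<lambda>_. 0) (\<xi> s) b s \<le> pre_pure G v (\<xi> s) b s"
      by (intro pre_pure_mono) (simp add: v_def)
    then show ?thesis
      using False pre_pure_const[OF s selector_moves[OF sel s] b, of 0] by (simp add: v_def)
  qed
  have "v t \<le> val1_strat G (memoryless \<xi>) F t"
  proof (rule subfixpoint_le_val1_strat[OF sel])
    show "\<forall>u\<in>cg_st G - F. v u = 0" using W1_subset[OF sel] by (auto simp: v_def)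
    show "\<forall>s\<in>cg_st G \<inter> F. \<forall>b\<in>cg_g2 G s. v s \<le> pre_pure G v (\<xi> s) b s" using sub by blast
  qed (use t in \<open>auto simp: v_def W1_def\<close>)
  then show "1 \<le> val1_strat G (memoryless \<xi>) F t" using t by (simp add: v_def)
qed (rule val1_strat_le_1)

lemma kunif_dist_uniform_moves1:
  assumes s: "s \<in> cg_st G" and k: "card (cg_mv G) \<le> k"
  shows "kunif_dist k (pmf_of_set (cg_g1 G s))"
  unfolding kunif_dist_def
proof
  fix a
  have "card (cg_g1 G s) \<le> k"
    using card_mono[OF finite_moves moves1_subset[OF s]] k by simp
  moreover have "1 \<le> card (cg_g1 G s)"
    using finite_moves1[OF s] moves1_nonempty[OF s] by (simp add: Suc_le_eq card_gt_0_iff)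
  ultimately show "\<exists>i j. i \<le> j \<and> j \<le> k \<and> pmf (pmf_of_set (cg_g1 G s)) a = real i / real j"
    using finite_moves1[OF s] moves1_nonempty[OF s]
    by (intro exI[where x="if a \<in> cg_g1 G s then 1 else 0"] exI[where x="card (cg_g1 G s)"]) auto
qed

lemma alg_run_kunif_selector:
  assumes run: "alg_run G F k \<gamma>"
  shows "selector G (\<gamma> j) \<and> kunif_selector G F (max k (card (cg_mv G))) (\<gamma> j)"
proof (induction j)
  case 0
  have "\<gamma> 0 = (\<lambda>s. pmf_of_set (cg_g1 G s))" using run by (simp add: alg_run_def)
  then show ?case
    using finite_moves1 moves1_nonempty kunif_dist_uniform_moves1[of _ "max k (card (cg_mv G))"]
    by (auto simp: selector_def kunif_selector_def)
next
  case (Suc j)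
  let ?k = "max k (card (cg_mv G))"
  have step: "alg_step G F ?k (\<gamma> j) (\<gamma> (Suc j))" using run by (simp add: alg_run_def)
  have "set_pmf (\<gamma> (Suc j) s) \<subseteq> cg_g1 G s \<and> kunif_dist ?k (\<gamma> (Suc j) s)"
    if "\<gamma> (Suc j) s \<noteq> \<gamma> j s" for s
    using step that unfolding alg_step_def Let_def optsel_def by (auto split: if_splits)
  with Suc show ?case unfolding selector_def kunif_selector_def by metis
qed

text \<open>Both kinds of switches strictly increase the value somewhere, so a step that leaves the
  value unchanged must be a terminating one.\<close>

lemma alg_step_stable_imp_terminal:
  fixes \<gamma> :: "'s \<Rightarrow> 'm pmf" and F :: "'s set"
  defines "z \<equiv> val1_strat G (memoryless \<gamma>) F"
  assumes k: "1 \<le> k" and step: "alg_step G F k \<gamma> \<gamma>'"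
    and sel: "selector G \<gamma>" and sel': "selector G \<gamma>'" and ku: "kunif_selector G F k \<gamma>"
    and stable: "\<forall>s\<in>cg_st G. z s = val1_strat G (memoryless \<gamma>') F s"
    and z_W1: "\<forall>t\<in>W1 G F. z t = 1" and z_less: "\<forall>t\<in>cg_st G - W1 G F. z t < 1"
  shows "improve_set G F k z = {} \<and> ({s \<in> cg_st G. P1 s \<in> as_win (TB G k z) (TB_F G k z F)} - W1 G F) = {}"
proof -
  have no_increase: "\<not> (\<exists>s\<in>cg_st G. z s < val1_strat G (memoryless \<gamma>') F s)"
    using stable by auto
  from step show ?thesis
    unfolding alg_step_def Let_def z_def[symmetric]
  proof (elim disjE conjE exE)
    assume "improve_set G F k z \<noteq> {}" "\<forall>s. s \<notin> improve_set G F k z \<longrightarrow> \<gamma>' s = \<gamma> s"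
      "\<forall>s\<in>improve_set G F k z. \<gamma>' s \<in> optsel G k z s"
    with val1_strat_increases_of_improve_set[OF k sel sel'] no_increase show ?thesis
      unfolding z_def by blast
  next
    fix \<sigma> assume "improve_set G F k z = {}"
      "{s \<in> cg_st G. P1 s \<in> as_win (TB G k z) (TB_F G k z F)} - W1 G F \<noteq> {}"
      "pure_as_strategy (TB G k z) (TB_F G k z F) \<sigma>"
      "\<forall>s. s \<notin> {s \<in> cg_st G. P1 s \<in> as_win (TB G k z) (TB_F G k z F)} - W1 G F \<longrightarrow> \<gamma>' s = \<gamma> s"
      "\<forall>s\<in>{s \<in> cg_st G. P1 s \<in> as_win (TB G k z) (TB_F G k z F)} - W1 G F.
         \<exists>A B. \<sigma> (P1 s) = P2 s A B \<and> \<gamma>' s \<in> optsel G k z s \<and>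
           set_pmf (\<gamma>' s) = A \<and> countopt G k z s (\<gamma>' s) = B"
    with val1_strat_increases_of_as_win_switch[OF sel sel' ku] z_W1 z_less no_increase show ?thesis
      unfolding z_def by blast
  qed blast
qed

end

theorem lemma17:
  fixes G :: "('s, 'm) cgame" and F :: "'s set" and k :: nat
    and \<gamma> :: "nat \<Rightarrow> 's \<Rightarrow> 'm pmf" and i :: nat
  assumes "wf_cgame G"
    and "F \<subseteq> cg_st G"
    and "\<forall>s \<in> W1 G F \<union> (cg_st G - F). \<forall>a\<in>cg_g1 G s. \<forall>b\<in>cg_g2 G s. cg_tr G s a b = return_pmf s"
    and "k > 0"
    and "alg_run G F k \<gamma>"
    and "\<forall>s\<in>cg_st G. val1_strat G (memoryless (\<gamma> i)) F s = val1_strat G (memoryless (\<gamma> (Suc i))) F s"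
  shows "\<forall>s\<in>cg_st G.
           (\<exists>\<xi>. selector G \<xi> \<and> kunif_selector G F (max k (card (cg_mv G))) \<xi> \<and>
                val1_strat G (memoryless \<xi>) F s = val1_strat G (memoryless (\<gamma> i)) F s) \<and>
           (\<forall>\<xi>. selector G \<xi> \<and> kunif_selector G F (max k (card (cg_mv G))) \<xi> \<longrightarrow>
                val1_strat G (memoryless \<xi>) F s \<le> val1_strat G (memoryless (\<gamma> i)) F s)"
proof -
  interpret wf_game G by (rule wf_game.intro) (rule assms(1))
  define k' where "k' = max k (card (cg_mv G))"
  define z where "z = val1_strat G (memoryless (\<gamma> i)) F"
  have k': "1 \<le> k'" using assms(4) by (simp add: k'_def)
  have sel: "selector G (\<gamma> i)" "kunif_selector G F k' (\<gamma> i)" "selector G (\<gamma> (Suc i))"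
    using alg_run_kunif_selector[OF assms(5)] by (auto simp: k'_def)
  have z_W1: "\<forall>t\<in>W1 G F. z t = 1"
    using val1_strat_W1[OF sel(1)] assms(3) by (simp add: z_def)
  have z_less: "\<forall>t\<in>cg_st G - W1 G F. z t < 1"
    using val1_strat_less_1[OF sel(1)] by (simp add: z_def)
  have "improve_set G F k' z = {} \<and> ({s \<in> cg_st G. P1 s \<in> as_win (TB G k' z) (TB_F G k' z F)} - W1 G F) = {}"
    using alg_step_stable_imp_terminal[OF k' _ sel(1,3,2) _ z_W1[unfolded z_def] z_less[unfolded z_def]]
      assms(5,6) unfolding z_def alg_run_def k'_def by blast
  then have "val1_strat G (memoryless \<xi>) F s \<le> z s"
    if "s \<in> cg_st G" "selector G \<xi>" "kunif_selector G F k' \<xi>" for s \<xi>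
    using val1_strat_le_of_no_improvement[OF k' that(2,3) _ z_W1 _ _ that(1)] val1_strat_outside
    unfolding improve_set_def z_def by (fastforce simp: not_less)
  with sel show ?thesis unfolding z_def k'_def by blast
qed

end
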